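(* The bracket $\{\cdot,\cdot\}_{2\alpha}$ induced on $\mathbf{RT}_{m+1}$ by $\alpha\,{\rm PB}_2(\mathbf A_1,\mathbf A_2,\mathbf S)$, in the coordinates $d_k,c_k^{(j)}$ ($1\le j\le m$), is given by: $\{d_k,d_l\}_{2\alpha}=0$ for all $k,l$; $\{d_k,c_k^{(j)}\}_{2\alpha}=-c_k^{(j)}(1+\alpha d_k)$, $\{c_k^{(j)},d_{k+j}\}_{2\alpha}=-c_k^{(j)}(1+\alpha d_{k+j})$; $\{c_k^{(i)},c_{k+i}^{(j)}\}_{2\alpha}=-c_k^{(i+j)}-\alpha c_k^{(i)}c_{k+i}^{(j)}$; for $i\le j$ and $1\le\ell\le i-1$: $\{c_k^{(i)},c_{k+\ell}^{(j)}\}_{2\alpha}=-\alpha c_k^{(i)}c_{k+\ell}^{(j)}+\alpha c_k^{(j+\ell)}c_{k+\ell}^{(i-\ell)}$; for $i\le j$ and $j-i+1\le\ell\le j-1$: $\{c_k^{(j)},c_{k+\ell}^{(i)}\}_{2\alpha}=-\alpha c_k^{(j)}c_{k+\ell}^{(i)}+\alpha c_k^{(i+\ell)}c_{k+\ell}^{(j-\ell)}$; all other brackets between coordinates (except those obtained by antisymmetry) vanish. (Here $N\ge2m+2$.)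
   Context: Setting as follows. Periodic lattice: $N\ge2m+2$, $m\ge1$, $\alpha\ne0$ real, subscripts modulo $N$; $\mathfrak g$ the twisted loop algebra $\{X(\lambda)\in gl(N)[\lambda,\lambda^{-1}]:\Omega X\Omega^{-1}=X(\omega\lambda)\}$ ($\omega=e^{2\pi i/N}$, $\Omega=\mathrm{diag}(1,\omega,\dots,\omega^{N-1})$), tacitly completed for formal inverses, $\langle X,Y\rangle$ = $\lambda^0$-coefficient of $\mathrm{tr}(XY)$; ${\rm A}_1={\rm R}_0+W$, ${\rm A}_2={\rm R}_0-W$, ${\rm S}=P_0-W$, ${\rm S}^*=P_0+W$ where $P_0,P_{>0},P_{<0}$ are projections on degree $0$, positive, negative $\lambda$-degree parts, ${\rm R}_0=P_{>0}-P_{<0}$, $W=W\circ P_0$, $W(E_{kk})=\sum_j\mathrm{sgn}(k-j)E_{jj}$. On $\mathfrak g\times\mathfrak g$ the bracket ${\rm PB}_2(\mathbf A_1,\mathbf A_2,\mathbf S)$ is $\{\Phi,\Psi\}=\frac12\sum_{i,j=1}^2[\langle(\mathbf A_1)_{ij}d'_j\Phi,d'_i\Psi\rangle-\langle(\mathbf A_2)_{ij}d_j\Phi,d_i\Psi\rangle+\langle(\mathbf S)_{ij}d_j\Phi,d'_i\Psi\rangle-\langle(\mathbf S^* )_{ij}d'_j\Phi,d_i\Psi\rangle]$, with $d_j\Phi=L_j\nabla_j\Phi$, $d'_j\Phi=\nabla_j\Phi L_j$ ($\nabla_j$ the partial gradient w.r.t. $\langle\cdot,\cdot\rangle$), and blocks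 $\mathbf A_1=\begin{pmatrix}{\rm A}_1&-{\rm S}\\{\rm S}^*&{\rm A}_1\end{pmatrix}$, $\mathbf A_2=\begin{pmatrix}{\rm A}_2&-{\rm S}^*\\{\rm S}&{\rm A}_2\end{pmatrix}$, $\mathbf S=\begin{pmatrix}{\rm S}&{\rm S}\\{\rm S}&-{\rm S}^*\end{pmatrix}$, $\mathbf S^*=\begin{pmatrix}{\rm S}^*&{\rm S}^*\\{\rm S}^*&-{\rm S}\end{pmatrix}$. $\mathbf{RT}_{m+1}$ = set of pairs $(L,U^{-1})$ with $L=\sum_k(1+\alpha d_k)E_{kk}+\alpha\lambda\sum_kE_{k+1,k}$, $U=I-\alpha\sum_{j=1}^m\lambda^{-j}\sum_kc_k^{(j)}E_{k,k+j}$; it is a Poisson submanifold, parametrized by $(d,c^{(1)},\dots,c^{(m)})\in\mathbb R^{(m+1)N}$. Convention: $c_k^{(p)}=0$ for $p>m$. *)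

theory Defs
  imports Complex_Main
begin

text \<open>Elements of the (completed) twisted loop algebra: coefficient functions
  X n i j = coefficient of lambda^n in the (i,j) entry, 0 <= i,j < N.\<close>

type_synonym lmat = "int \<Rightarrow> nat \<Rightarrow> nat \<Rightarrow> real"

definition in_g :: "nat \<Rightarrow> lmat \<Rightarrow> bool" where
  "in_g N X \<longleftrightarrow>
     (\<forall>n i j. X n i j \<noteq> 0 \<longrightarrow> i < N \<and> j < N \<and> n mod int N = (int i - int j) mod int N)
   \<and> (\<exists>b. \<forall>n i j. n > b \<longrightarrow> X n i j = 0)"

definition lmul :: "nat \<Rightarrow> lmat \<Rightarrow> lmat \<Rightarrow> lmat" where
  "lmul N X Y = (\<lambda>n i j. \<Sum>k<N. \<Sum>p\<in>{p. X p i k \<noteq> 0 \<and> Y (n - p) k j \<noteq> 0}. X p i k * Y (n - p) k j)"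

text \<open>Pairing: lambda^0 coefficient of tr(XY).\<close>
definition lpair :: "nat \<Rightarrow> lmat \<Rightarrow> lmat \<Rightarrow> real" where
  "lpair N X Y = (\<Sum>i<N. \<Sum>j<N. \<Sum>p\<in>{p. X p i j \<noteq> 0 \<and> Y (- p) j i \<noteq> 0}. X p i j * Y (- p) j i)"

definition lone :: "nat \<Rightarrow> lmat" where
  "lone N = (\<lambda>n i j. if n = 0 \<and> i = j \<and> i < N then 1 else 0)"

definition ladd :: "lmat \<Rightarrow> lmat \<Rightarrow> lmat" where
  "ladd X Y = (\<lambda>n i j. X n i j + Y n i j)"

definition lsmul :: "real \<Rightarrow> lmat \<Rightarrow> lmat" where
  "lsmul t X = (\<lambda>n i j. t * X n i j)"

definition lneg :: "lmat \<Rightarrow> lmat" where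
  "lneg X = (\<lambda>n i j. - X n i j)"

definition linv :: "nat \<Rightarrow> lmat \<Rightarrow> lmat" where
  "linv N X = (THE Z. in_g N Z \<and> lmul N Z X = lone N \<and> lmul N X Z = lone N)"

definition P0 :: "lmat \<Rightarrow> lmat" where
  "P0 X = (\<lambda>n i j. if n = 0 then X n i j else 0)"
definition Ppos :: "lmat \<Rightarrow> lmat" where
  "Ppos X = (\<lambda>n i j. if n > 0 then X n i j else 0)"
definition Pneg :: "lmat \<Rightarrow> lmat" where
  "Pneg X = (\<lambda>n i j. if n < 0 then X n i j else 0)"
definition R0 :: "lmat \<Rightarrow> lmat" where
  "R0 X = ladd (Ppos X) (lneg (Pneg X))"

definition Wop :: "nat \<Rightarrow> lmat \<Rightarrow> lmat" where
  "Wop N X = (\<lambda>n i j. if n = 0 \<and> i = j \<and> i < N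
        then (\<Sum>k<N. sgn (real k - real i) * X 0 k k) else 0)"

definition Sop :: "nat \<Rightarrow> lmat \<Rightarrow> lmat" where
  "Sop N X = ladd (P0 X) (lneg (Wop N X))"
definition Sst :: "nat \<Rightarrow> lmat \<Rightarrow> lmat" where
  "Sst N X = ladd (P0 X) (Wop N X)"
definition Aone :: "nat \<Rightarrow> lmat \<Rightarrow> lmat" where
  "Aone N X = ladd (R0 X) (Wop N X)"
definition Atwo :: "nat \<Rightarrow> lmat \<Rightarrow> lmat" where
  "Atwo N X = ladd (R0 X) (lneg (Wop N X))"

definition bA1 :: "nat \<Rightarrow> nat \<Rightarrow> nat \<Rightarrow> lmat \<Rightarrow> lmat" where
  "bA1 N i j = (if i = 1 \<and> j = 1 then Aone N else if i = 1 \<and> j = 2 then (\<lambda>X. lneg (Sop N X))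
     else if i = 2 \<and> j = 1 then Sst N else Aone N)"
definition bA2 :: "nat \<Rightarrow> nat \<Rightarrow> nat \<Rightarrow> lmat \<Rightarrow> lmat" where
  "bA2 N i j = (if i = 1 \<and> j = 1 then Atwo N else if i = 1 \<and> j = 2 then (\<lambda>X. lneg (Sst N X))
     else if i = 2 \<and> j = 1 then Sop N else Atwo N)"
definition bS :: "nat \<Rightarrow> nat \<Rightarrow> nat \<Rightarrow> lmat \<Rightarrow> lmat" where
  "bS N i j = (if i = 2 \<and> j = 2 then (\<lambda>X. lneg (Sst N X)) else Sop N)"
definition bSst :: "nat \<Rightarrow> nat \<Rightarrow> nat \<Rightarrow> lmat \<Rightarrow> lmat" where
  "bSst N i j = (if i = 2 \<and> j = 2 then (\<lambda>X. lneg (Sop N X)) else Sst N)"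

definition comp :: "nat \<Rightarrow> lmat \<times> lmat \<Rightarrow> lmat" where
  "comp k P = (if k = 1 then fst P else snd P)"

text \<open>PB_2(A1,A2,S) at point P=(L1,L2), evaluated on gradients G=(grad_1 Phi, grad_2 Phi),
  H=(grad_1 Psi, grad_2 Psi); d_j = L_j grad_j, d'_j = grad_j L_j.\<close>
definition pb2 :: "nat \<Rightarrow> lmat \<times> lmat \<Rightarrow> lmat \<times> lmat \<Rightarrow> lmat \<times> lmat \<Rightarrow> real" where
  "pb2 N P G H = (let
      dd = (\<lambda>j Q. lmul N (comp j P) (comp j Q));
      dp = (\<lambda>j Q. lmul N (comp j Q) (comp j P))
    in 1/2 * (\<Sum>i\<in>{1,2}. \<Sum>j\<in>{1,2}.
         lpair N (bA1 N i j (dp j G)) (dp i H)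
       - lpair N (bA2 N i j (dd j G)) (dd i H)
       + lpair N (bS N i j (dd j G)) (dp i H)
       - lpair N (bSst N i j (dp j G)) (dd i H)))"

definition has_grad :: "nat \<Rightarrow> (lmat \<times> lmat \<Rightarrow> real) \<Rightarrow> lmat \<times> lmat \<Rightarrow> lmat \<times> lmat \<Rightarrow> bool" where
  "has_grad N \<Phi> P G \<longleftrightarrow> in_g N (fst G) \<and> in_g N (snd G) \<and>
     (\<forall>V. in_g N V \<longrightarrow>
        ((\<lambda>t. \<Phi> (ladd (fst P) (lsmul t V), snd P)) has_real_derivative lpair N (fst G) V) (at 0)
      \<and> ((\<lambda>t. \<Phi> (fst P, ladd (snd P) (lsmul t V))) has_real_derivative lpair N (snd G) V) (at 0))"

definition grad :: "nat \<Rightarrow> (lmat \<times> lmat \<Rightarrow> real) \<Rightarrow> lmat \<times> lmat \<Rightarrow> lmat \<times> lmat" where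
  "grad N \<Phi> P = (THE G. has_grad N \<Phi> P G)"

text \<open>The manifold RT_{m+1}: L and U.  d k = d_k, c j k = c_k^{(j)} (0 <= k < N).\<close>
definition Lmat :: "nat \<Rightarrow> real \<Rightarrow> (nat \<Rightarrow> real) \<Rightarrow> lmat" where
  "Lmat N \<alpha> d = (\<lambda>n i j. if i < N \<and> j < N then
      (if n = 0 \<and> i = j then 1 + \<alpha> * d i
       else if n = 1 \<and> i = (j + 1) mod N then \<alpha> else 0) else 0)"

definition Umat :: "nat \<Rightarrow> nat \<Rightarrow> real \<Rightarrow> (nat \<Rightarrow> nat \<Rightarrow> real) \<Rightarrow> lmat" where
  "Umat N m \<alpha> c = (\<lambda>n i j. lone N n i j - \<alpha> *
      (if i < N \<and> j < N \<and> - int m \<le> n \<and> n \<le> -1 \<and> j = (i + nat (- n)) mod N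
       then c (nat (- n)) i else 0))"

definition RTpt :: "nat \<Rightarrow> nat \<Rightarrow> real \<Rightarrow> (nat \<Rightarrow> real) \<Rightarrow> (nat \<Rightarrow> nat \<Rightarrow> real) \<Rightarrow> lmat \<times> lmat" where
  "RTpt N m \<alpha> d c = (Lmat N \<alpha> d, linv N (Umat N m \<alpha> c))"

text \<open>Coordinates: Dc k = d_k, Cc j k = c_k^{(j)}.\<close>
datatype coord = Dc nat | Cc nat nat

definition valid_coord :: "nat \<Rightarrow> nat \<Rightarrow> coord \<Rightarrow> bool" where
  "valid_coord N m x = (case x of Dc k \<Rightarrow> k < N | Cc j k \<Rightarrow> 1 \<le> j \<and> j \<le> m \<and> k < N)"

definition ltrunc :: "lmat \<Rightarrow> lmat" where
  "ltrunc X = (\<lambda>n i j. if n \<le> 0 then X n i j else 0)"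

text \<open>Extensions of the coordinate functions to g x g: d_k from the lambda^0 diagonal
  of the first factor; c_k^{(j)} from U = (second factor)^{-1} (nonpositive part inverted).\<close>
definition coordfun :: "nat \<Rightarrow> real \<Rightarrow> coord \<Rightarrow> lmat \<times> lmat \<Rightarrow> real" where
  "coordfun N \<alpha> x P = (case x of
      Dc k \<Rightarrow> (fst P 0 k k - 1) / \<alpha>
    | Cc j k \<Rightarrow> - (linv N (ltrunc (snd P)) (- int j) k ((k + j) mod N)) / \<alpha>)"

definition rtbr :: "nat \<Rightarrow> nat \<Rightarrow> real \<Rightarrow> (nat \<Rightarrow> real) \<Rightarrow> (nat \<Rightarrow> nat \<Rightarrow> real) \<Rightarrow> coord \<Rightarrow> coord \<Rightarrow> real" where
  "rtbr N m \<alpha> d c x y = (let P = RTpt N m \<alpha> d c in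
      \<alpha> * pb2 N P (grad N (coordfun N \<alpha> x) P) (grad N (coordfun N \<alpha> y) P))"

definition cv :: "nat \<Rightarrow> (nat \<Rightarrow> nat \<Rightarrow> real) \<Rightarrow> nat \<Rightarrow> nat \<Rightarrow> real" where
  "cv m c p k = (if 1 \<le> p \<and> p \<le> m then c p k else 0)"

definition listed :: "nat \<Rightarrow> coord \<Rightarrow> coord \<Rightarrow> bool" where
  "listed N x y \<longleftrightarrow>
     (\<exists>k j. x = Dc k \<and> y = Cc j k)
   \<or> (\<exists>k j. x = Cc j k \<and> y = Dc ((k + j) mod N))
   \<or> (\<exists>i j k. x = Cc i k \<and> y = Cc j ((k + i) mod N))
   \<or> (\<exists>i j k l. i \<le> j \<and> 1 \<le> l \<and> l \<le> i - 1 \<and> x = Cc i k \<and> y = Cc j ((k + l) mod N))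
   \<or> (\<exists>i j k l. i \<le> j \<and> j - i + 1 \<le> l \<and> l \<le> j - 1 \<and> x = Cc j k \<and> y = Cc i ((k + l) mod N))"

end

theory Submission
  imports Defs "HOL-Library.Groups_Big_Fun"
begin

text \<open>At a point \<open>(L, U\<^sup>-\<^sup>1)\<close> of \<open>RT\<^sub>m\<^sub>+\<^sub>1\<close> the gradient of \<open>d\<^sub>k\<close> is \<open>(E\<^sub>k\<^sub>k / \<alpha>, 0)\<close> and that of
  \<open>c\<^sub>k\<^sup>(\<^sup>j\<^sup>)\<close> is \<open>(0, P\<^sub>\<ge>\<^sub>0(U \<lambda>\<^sup>j E\<^sub>k\<^sub>+\<^sub>j\<^sub>,\<^sub>k U) / \<alpha>)\<close>, obtained by differentiating \<open>U = (U\<^sup>-\<^sup>1)\<^sup>-\<^sup>1\<close> with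
  the resolvent identity. Inserted into \<open>PB\<^sub>2\<close>, the \<open>d\<close>-\<open>d\<close> brackets vanish because only constant
  diagonals enter, each once with each sign of \<open>W\<close>; the \<open>d\<close>-\<open>c\<close> brackets only see the constant
  diagonals of \<open>G U\<^sup>-\<^sup>1\<close> and \<open>U\<^sup>-\<^sup>1 G\<close>, which are single entries at \<open>k\<close> and \<open>k + j\<close>. For two
  \<open>c\<close>-coordinates, invariance of the pairing turns the \<open>R\<^sub>0\<close>-terms into pairings of the positive
  parts of \<open>U \<lambda>\<^sup>i E\<close> and \<open>\<lambda>\<^sup>i E U\<close>. Each of these is a single product of two coefficients of \<open>U\<close>,
  present according to how the index ranges \<open>[k, k + i]\<close> and \<open>[k', k' + j]\<close> overlap on the cycle
  \<open>\<int>/N\<close>, while \<open>P\<^sub>0\<close> and \<open>W\<close> contribute a sign pattern of the four endpoints. As \<open>N \<ge> 2m + 2\<close>,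
  two such ranges never overlap at both ends, which leaves exactly the listed cases.\<close>

section \<open>Finitely supported sums over the integers\<close>

lemma finite_nonzero_if_bounded:
  "(\<And>p. f p \<noteq> 0 \<Longrightarrow> a \<le> p \<and> p \<le> b) \<Longrightarrow> finite {p::int. f p \<noteq> 0}"
  by (rule finite_subset[of _ "{a..b}"]) auto

lemma Sum_any_eq_sum: "finite A \<Longrightarrow> (\<And>p. p \<notin> A \<Longrightarrow> f p = 0) \<Longrightarrow> Sum_any f = sum f A"
  by (rule Sum_any.expand_superset) auto

lemma Sum_any_single: "(\<And>p. p \<noteq> a \<Longrightarrow> f p = 0) \<Longrightarrow> Sum_any f = (f a :: real)"
  using Sum_any_eq_sum[of "{a}" f] by auto

lemma Sum_any_mult_right: "Sum_any f * (c::real) = Sum_any (\<lambda>p. f p * c)"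
proof (cases "c = 0")
  case False
  then have "{p. f p * c \<noteq> 0} = {p. f p \<noteq> 0}" by auto
  then show ?thesis unfolding Sum_any.expand_set by (simp add: sum_distrib_right)
qed simp

lemma Sum_any_mult_left: "(c::real) * Sum_any f = Sum_any (\<lambda>p. c * f p)"
  using Sum_any_mult_right[of f c] by (simp add: mult.commute)

lemma Sum_any_sum_swap:
  assumes "finite I" "\<And>k. k \<in> I \<Longrightarrow> finite {p. f k p \<noteq> (0::real)}"
  shows "Sum_any (\<lambda>p. \<Sum>k\<in>I. f k p) = (\<Sum>k\<in>I. Sum_any (f k))"
proof -
  let ?A = "\<Union>k\<in>I. {p. f k p \<noteq> 0}"
  have fin: "finite ?A" using assms by auto
  have "Sum_any (\<lambda>p. \<Sum>k\<in>I. f k p) = (\<Sum>p\<in>?A. \<Sum>k\<in>I. f k p)"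
    by (rule Sum_any_eq_sum[OF fin]) (auto intro: sum.neutral)
  also have "\<dots> = (\<Sum>k\<in>I. \<Sum>p\<in>?A. f k p)" by (rule sum.swap)
  also have "\<dots> = (\<Sum>k\<in>I. Sum_any (f k))"
    by (rule sum.cong[OF refl], rule Sum_any_eq_sum[symmetric, OF fin]) auto
  finally show ?thesis .
qed

lemma Sum_any_shift: "Sum_any (f :: int \<Rightarrow> 'a::comm_monoid_add) = Sum_any (\<lambda>q. f (q - c))"
proof (rule Sum_any.reindex_cong[of "\<lambda>q. q - c"])
  show "bij (\<lambda>q::int. q - c)" by (rule bij_betw_byWitness[of _ "\<lambda>q. q + c"]) auto
qed auto

lemma Sum_any_reflect: "Sum_any (f :: int \<Rightarrow> 'a::comm_monoid_add) = Sum_any (\<lambda>q. f (- q))"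
proof (rule Sum_any.reindex_cong[of uminus])
  show "bij (uminus :: int \<Rightarrow> int)" by (rule bij_betw_byWitness[of _ uminus]) auto
qed auto

lemma sum_sum_delta:
  fixes a0 b0 :: nat
  assumes "a0 < N" "b0 < N"
  shows "(\<Sum>a<N. \<Sum>b<N. if a = a0 \<and> b = b0 then f a b else (0::real)) = f a0 b0"
proof -
  have "(\<Sum>b<N. if a = a0 \<and> b = b0 then f a b else 0) = (if a = a0 then f a b0 else 0)" for a
    using assms(2) by (simp add: sum.delta)
  then show ?thesis using assms(1) by (simp add: sum.delta')
qed

section \<open>Truncated Laurent series of matrices\<close>

definition deg_le :: "int \<Rightarrow> lmat \<Rightarrow> bool" where
  "deg_le B X \<longleftrightarrow> (\<forall>n i j. B < n \<longrightarrow> X n i j = 0)"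

definition deg_ge :: "int \<Rightarrow> lmat \<Rightarrow> bool" where
  "deg_ge B X \<longleftrightarrow> (\<forall>n i j. n < B \<longrightarrow> X n i j = 0)"

definition square :: "nat \<Rightarrow> lmat \<Rightarrow> bool" where
  "square N X \<longleftrightarrow> (\<forall>n i j. X n i j \<noteq> 0 \<longrightarrow> i < N \<and> j < N)"

definition twisted :: "nat \<Rightarrow> lmat \<Rightarrow> bool" where
  "twisted N X \<longleftrightarrow> (\<forall>n i j. X n i j \<noteq> 0 \<longrightarrow> n mod int N = (int i - int j) mod int N)"

definition lzero :: lmat where
  "lzero = (\<lambda>n i j. 0)"

lemma in_g_iff: "in_g N X \<longleftrightarrow> square N X \<and> twisted N X \<and> (\<exists>B. deg_le B X)"
  unfolding in_g_def square_def twisted_def deg_le_def by blast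

lemma deg_le_mono: "deg_le B X \<Longrightarrow> B \<le> C \<Longrightarrow> deg_le C X"
  unfolding deg_le_def by auto

lemma deg_leD: "deg_le B X \<Longrightarrow> X n i j \<noteq> 0 \<Longrightarrow> n \<le> B"
  unfolding deg_le_def by force

lemma deg_le_smult: "deg_le B X \<Longrightarrow> deg_le B (\<lambda>n i j. c * X n i j)"
  unfolding deg_le_def by simp

lemma deg_le_add: "deg_le B X \<Longrightarrow> deg_le B Y \<Longrightarrow> deg_le B (\<lambda>n i j. X n i j + Y n i j)"
  unfolding deg_le_def by simp

lemma deg_le_lone: "deg_le 0 (lone N)"
  unfolding deg_le_def lone_def by simp

lemma in_g_lzero: "in_g N lzero"
  unfolding in_g_def lzero_def by auto

lemma lmul_Sum_any: "lmul N X Y n i j = (\<Sum>k<N. Sum_any (\<lambda>p. X p i k * Y (n - p) k j))"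
  unfolding lmul_def Sum_any.expand_set by simp

lemma lpair_Sum_any: "lpair N X Y = (\<Sum>i<N. \<Sum>j<N. Sum_any (\<lambda>p. X p i j * Y (- p) j i))"
  unfolding lpair_def Sum_any.expand_set by simp

lemma lpair_eq_trace: "lpair N X Z = (\<Sum>i<N. lmul N X Z 0 i i)"
  by (simp add: lpair_Sum_any lmul_Sum_any)

lemma lmul_nonzeroE:
  assumes "lmul N X Y n i j \<noteq> 0"
  obtains k p where "k < N" "X p i k \<noteq> 0" "Y (n - p) k j \<noteq> 0"
proof -
  obtain k where "k < N" and "Sum_any (\<lambda>p. X p i k * Y (n - p) k j) \<noteq> 0"
    using assms sum.not_neutral_contains_not_neutral unfolding lmul_Sum_any by blast
  moreover obtain p where "X p i k * Y (n - p) k j \<noteq> 0"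
    using calculation(2) by (rule Sum_any.not_neutral_obtains_not_neutral)
  ultimately show ?thesis using that by auto
qed

lemma deg_le_lmul:
  assumes "deg_le B X" "deg_le C Y"
  shows "deg_le (B + C) (lmul N X Y)"
  unfolding deg_le_def
proof (intro allI impI, rule ccontr)
  fix n i j assume "B + C < n" "lmul N X Y n i j \<noteq> 0"
  then obtain k p where "X p i k \<noteq> 0" "Y (n - p) k j \<noteq> 0" by (elim lmul_nonzeroE)
  then have "p \<le> B" "n - p \<le> C" using deg_leD assms by auto
  with \<open>B + C < n\<close> show False by linarith
qed

lemma deg_ge_lmul:
  assumes "deg_ge B X" "deg_ge C Y"
  shows "deg_ge (B + C) (lmul N X Y)"
  unfolding deg_ge_def
proof (intro allI impI, rule ccontr)
  fix n i j assume "n < B + C" "lmul N X Y n i j \<noteq> 0"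
  then obtain k p where "X p i k \<noteq> 0" "Y (n - p) k j \<noteq> 0" by (elim lmul_nonzeroE)
  then have "B \<le> p" "C \<le> n - p" using assms unfolding deg_ge_def by (auto simp: not_less[symmetric])
  with \<open>n < B + C\<close> show False by linarith
qed

lemma square_lmul:
  assumes "square N X" "square N Y"
  shows "square N (lmul N X Y)"
  unfolding square_def
proof (intro allI impI)
  fix n i j assume "lmul N X Y n i j \<noteq> 0"
  then obtain k p where "X p i k \<noteq> 0" "Y (n - p) k j \<noteq> 0" by (rule lmul_nonzeroE)
  then show "i < N \<and> j < N" using assms unfolding square_def by blast
qed

lemma twisted_lmul:
  assumes "twisted N X" "twisted N Y"
  shows "twisted N (lmul N X Y)"
  unfolding twisted_def
proof (intro allI impI)
  fix n i j assume "lmul N X Y n i j \<noteq> 0"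
  then obtain k p where "X p i k \<noteq> 0" "Y (n - p) k j \<noteq> 0" by (rule lmul_nonzeroE)
  then have "p mod int N = (int i - int k) mod int N" "(n - p) mod int N = (int k - int j) mod int N"
    using assms unfolding twisted_def by auto
  then have "(p + (n - p)) mod int N = ((int i - int k) + (int k - int j)) mod int N"
    by (metis mod_add_cong)
  then show "n mod int N = (int i - int j) mod int N" by simp
qed

lemma finite_lmul_terms:
  assumes "deg_le B X" "deg_le C Y"
  shows "finite {p. X p i k * Y (n - p) k j \<noteq> 0}"
proof (rule finite_nonzero_if_bounded[of _ "n - C" B])
  fix p assume "X p i k * Y (n - p) k j \<noteq> 0"
  then have "p \<le> B" "n - p \<le> C" using deg_leD assms by auto
  then show "n - C \<le> p \<and> p \<le> B" by linarith
qed

text \<open>Without an upper bound on the degrees, the sums over degrees in \<open>lmul\<close> may have infinite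
  support, and then \<open>Sum_any\<close> silently returns \<open>0\<close>; hence the \<open>deg_le\<close> hypotheses.\<close>

lemma lmul_assoc:
  assumes "deg_le B X" "deg_le B Y" "deg_le B Z"
  shows "lmul N (lmul N X Y) Z = lmul N X (lmul N Y Z)"
proof (intro ext)
  fix n i j
  define g where "g k k' p q = X p i k' * Y (q - p) k' k * Z (n - q) k j" for k k' p q
  have supp: "p \<in> {n - 2*B..B} \<and> q \<in> {n - B..2*B}" if "g k k' p q \<noteq> 0" for k k' p q
  proof -
    have "p \<le> B" "q - p \<le> B" "n - q \<le> B"
      using that deg_leD assms unfolding g_def by auto
    then show ?thesis by auto
  qed
  have fin_q: "finite {q. Sum_any (\<lambda>p. g k k' p q) \<noteq> 0}" for k k'
  proof (rule finite_nonzero_if_bounded[of _ "n - B" "2*B"])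
    fix q assume "Sum_any (\<lambda>p. g k k' p q) \<noteq> 0"
    then obtain p where "g k k' p q \<noteq> 0" by (rule Sum_any.not_neutral_obtains_not_neutral)
    then show "n - B \<le> q \<and> q \<le> 2*B" using supp by auto
  qed
  have fin_p: "finite {p. Sum_any (\<lambda>q. g k k' p q) \<noteq> 0}" for k k'
  proof (rule finite_nonzero_if_bounded[of _ "n - 2*B" B])
    fix p assume "Sum_any (\<lambda>q. g k k' p q) \<noteq> 0"
    then obtain q where "g k k' p q \<noteq> 0" by (rule Sum_any.not_neutral_obtains_not_neutral)
    then show "n - 2*B \<le> p \<and> p \<le> B" using supp by auto
  qed
  have swap: "Sum_any (\<lambda>q. Sum_any (\<lambda>p. g k k' p q)) = Sum_any (\<lambda>p. Sum_any (\<lambda>q. g k k' p q))"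
    for k k'
    by (rule Sum_any.swap[symmetric, of "{n - 2*B..B} \<times> {n - B..2*B}"]) (auto dest: supp)
  have inner: "Sum_any (\<lambda>q. g k k' p q) = X p i k' * Sum_any (\<lambda>r. Y r k' k * Z (n - p - r) k j)"
    for k k' p
    unfolding g_def Sum_any_mult_left by (subst Sum_any_shift[where c="-p"]) (simp add: algebra_simps)
  have "lmul N (lmul N X Y) Z n i j
      = (\<Sum>k<N. Sum_any (\<lambda>q. \<Sum>k'<N. Sum_any (\<lambda>p. g k k' p q)))"
    by (simp add: lmul_Sum_any sum_distrib_right Sum_any_mult_right g_def)
  also have "\<dots> = (\<Sum>k<N. \<Sum>k'<N. Sum_any (\<lambda>p. Sum_any (\<lambda>q. g k k' p q)))"
    by (simp add: Sum_any_sum_swap fin_q swap)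
  also have "\<dots> = (\<Sum>k'<N. Sum_any (\<lambda>p. \<Sum>k<N. Sum_any (\<lambda>q. g k k' p q)))"
    by (subst sum.swap) (simp add: Sum_any_sum_swap fin_p)
  also have "\<dots> = lmul N X (lmul N Y Z) n i j"
    by (simp add: lmul_Sum_any inner sum_distrib_left Sum_any_mult_left)
  finally show "lmul N (lmul N X Y) Z n i j = lmul N X (lmul N Y Z) n i j" .
qed

lemma lmul_smult_left: "lmul N (\<lambda>n i j. c * X n i j) Y = (\<lambda>n i j. c * lmul N X Y n i j)"
  by (intro ext) (simp add: lmul_Sum_any sum_distrib_left Sum_any_mult_left mult.assoc)

lemma lmul_smult_right: "lmul N X (\<lambda>n i j. c * Y n i j) = (\<lambda>n i j. c * lmul N X Y n i j)"
  by (intro ext) (simp add: lmul_Sum_any sum_distrib_left Sum_any_mult_left mult.left_commute)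

lemma lmul_uminus_left: "lmul N (\<lambda>n i j. - X n i j) Y = (\<lambda>n i j. - lmul N X Y n i j)"
  using lmul_smult_left[of N "-1" X Y] by simp

lemma lmul_uminus_right: "lmul N X (\<lambda>n i j. - Y n i j) = (\<lambda>n i j. - lmul N X Y n i j)"
  using lmul_smult_right[of N X "-1" Y] by simp

lemma lmul_add_left:
  assumes "deg_le B X" "deg_le B Y" "deg_le C Z"
  shows "lmul N (\<lambda>n i j. X n i j + Y n i j) Z = (\<lambda>n i j. lmul N X Z n i j + lmul N Y Z n i j)"
  unfolding lmul_Sum_any sum.distrib[symmetric] distrib_right
  by (intro ext sum.cong refl Sum_any.distrib finite_lmul_terms[OF assms(1,3)]
      finite_lmul_terms[OF assms(2,3)])

lemma lmul_add_right:
  assumes "deg_le B X" "deg_le C Y" "deg_le C Z"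
  shows "lmul N X (\<lambda>n i j. Y n i j + Z n i j) = (\<lambda>n i j. lmul N X Y n i j + lmul N X Z n i j)"
  unfolding lmul_Sum_any sum.distrib[symmetric] distrib_left
  by (intro ext sum.cong refl Sum_any.distrib finite_lmul_terms[OF assms(1,2)]
      finite_lmul_terms[OF assms(1,3)])

lemma lmul_diff_left:
  assumes "deg_le B X" "deg_le B Y" "deg_le C Z"
  shows "lmul N (\<lambda>n i j. X n i j - Y n i j) Z = (\<lambda>n i j. lmul N X Z n i j - lmul N Y Z n i j)"
  using lmul_add_left[OF assms(1) deg_le_smult[OF assms(2), of "-1"] assms(3)]
  by (simp add: lmul_uminus_left)

lemma lmul_diff_right:
  assumes "deg_le B X" "deg_le C Y" "deg_le C Z"
  shows "lmul N X (\<lambda>n i j. Y n i j - Z n i j) = (\<lambda>n i j. lmul N X Y n i j - lmul N X Z n i j)"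
  using lmul_add_right[OF assms(1,2) deg_le_smult[OF assms(3), of "-1"]]
  by (simp add: lmul_uminus_right)

lemma lmul_lone_left:
  assumes "square N X"
  shows "lmul N (lone N) X = X"
proof (intro ext)
  fix n i j
  have "lmul N (lone N) X n i j = (\<Sum>k<N. if k = i then (if i < N then X n i j else 0) else 0)"
    unfolding lmul_Sum_any by (intro sum.cong refl, subst Sum_any_single[of 0]) (auto simp: lone_def)
  then show "lmul N (lone N) X n i j = X n i j"
    using assms unfolding square_def by auto
qed

lemma lmul_lone_right:
  assumes "square N X"
  shows "lmul N X (lone N) = X"
proof (intro ext)
  fix n i j
  have "lmul N X (lone N) n i j = (\<Sum>k<N. if k = j then (if j < N then X n i j else 0) else 0)"
    unfolding lmul_Sum_any by (intro sum.cong refl, subst Sum_any_single[of n]) (auto simp: lone_def)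
  then show "lmul N X (lone N) n i j = X n i j"
    using assms unfolding square_def by auto
qed

lemma lpair_commute: "lpair N X Z = lpair N Z X"
  unfolding lpair_Sum_any
  by (subst sum.swap, subst (2) Sum_any_reflect) (simp add: mult.commute)

lemma lpair_lmul_assoc:
  assumes "deg_le B X" "deg_le B Y" "deg_le B Z"
  shows "lpair N (lmul N X Y) Z = lpair N X (lmul N Y Z)"
  by (simp add: lpair_eq_trace lmul_assoc[OF assms])

lemma lpair_lmul_cyclic:
  assumes "deg_le B X" "deg_le B Y" "deg_le B Z"
  shows "lpair N (lmul N X Y) Z = lpair N Y (lmul N Z X)"
  by (metis assms lpair_lmul_assoc lpair_commute)

lemma lpair_smult_left: "lpair N (\<lambda>n i j. c * X n i j) Z = c * lpair N X Z"
  by (simp add: lpair_Sum_any sum_distrib_left Sum_any_mult_left mult.assoc)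

lemma lpair_smult_right: "lpair N Z (\<lambda>n i j. c * X n i j) = c * lpair N Z X"
  by (metis lpair_commute lpair_smult_left)

lemma lpair_add_left:
  assumes "deg_le B X" "deg_le B Y" "deg_le C Z"
  shows "lpair N (\<lambda>n i j. X n i j + Y n i j) Z = lpair N X Z + lpair N Y Z"
  using finite_lmul_terms[OF assms(1,3), of _ _ 0] finite_lmul_terms[OF assms(2,3), of _ _ 0]
  by (simp add: lpair_Sum_any distrib_right Sum_any.distrib sum.distrib[symmetric])

lemma lpair_diff_left:
  assumes "deg_le B X" "deg_le B Y" "deg_le C Z"
  shows "lpair N (\<lambda>n i j. X n i j - Y n i j) Z = lpair N X Z - lpair N Y Z"
  using lpair_add_left[OF assms(1) deg_le_smult[OF assms(2), of "-1"] assms(3)]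
    lpair_smult_left[of N "-1" Y Z]
  by simp

lemma lpair_diff_right:
  assumes "deg_le B X" "deg_le B Y" "deg_le C Z"
  shows "lpair N Z (\<lambda>n i j. X n i j - Y n i j) = lpair N Z X - lpair N Z Y"
  using lpair_diff_left[OF assms] by (simp add: lpair_commute)

lemma lpair_eq_0_if_deg_negative:
  assumes "deg_le B X" "deg_le C Z" "B + C < 0"
  shows "lpair N X Z = 0"
proof -
  have "X p i j * Z (- p) j i = 0" for p i j
    using deg_leD[OF assms(1), of p i j] deg_leD[OF assms(2), of "- p" j i] assms(3) by fastforce
  then show ?thesis unfolding lpair_Sum_any by (simp only: Sum_any.neutral sum.neutral_const)
qed

lemma lpair_delta:
  assumes "a0 < N" "b0 < N"
  shows "lpair N (\<lambda>n a b. if n = n0 \<and> a = a0 \<and> b = b0 then v else 0) Z = v * Z (- n0) b0 a0"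
proof -
  have "lpair N (\<lambda>n a b. if n = n0 \<and> a = a0 \<and> b = b0 then v else 0) Z
      = (\<Sum>a<N. \<Sum>b<N. if a = a0 \<and> b = b0 then v * Z (- n0) b a else 0)"
    unfolding lpair_Sum_any by (intro sum.cong refl, subst Sum_any_single[of n0]) auto
  also have "\<dots> = v * Z (- n0) b0 a0" using assms by (rule sum_sum_delta)
  finally show ?thesis .
qed

section \<open>Inverting series of non-positive degree\<close>

definition nonpos_unit :: "nat \<Rightarrow> lmat \<Rightarrow> bool" where
  "nonpos_unit N A \<longleftrightarrow> deg_le 0 A \<and> square N A \<and> twisted N A \<and> (\<forall>a<N. A 0 a a \<noteq> 0)"

text \<open>Solving \<open>A R = 1\<close> degree by degree in \<open>\<lambda>\<^sup>-\<^sup>1\<close>: twistedness makes the constant term of \<open>A\<close>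
  diagonal, so each coefficient of \<open>R\<close> is determined by those of higher degree.\<close>

function rinv :: "nat \<Rightarrow> lmat \<Rightarrow> int \<Rightarrow> nat \<Rightarrow> nat \<Rightarrow> real" where
  "rinv N A n a b = (if a < N \<and> b < N \<and> n \<le> 0 then
     (if n = 0 then (if a = b then 1 / A 0 a a else 0)
      else - (1 / A 0 a a) * (\<Sum>p\<in>{n..-1}. \<Sum>c<N. A p a c * rinv N A (n - p) c b))
    else 0)"
  by pat_completeness auto
termination by (relation "measure (\<lambda>(N, A, n, a, b). nat (- n))") auto

declare rinv.simps[simp del]

lemma deg_le_rinv: "deg_le 0 (rinv N A)"
  unfolding deg_le_def by (subst rinv.simps) simp

lemma square_rinv: "square N (rinv N A)"
  unfolding square_def by (subst rinv.simps) (simp split: if_splits)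

lemma rinv_constant: "a < N \<Longrightarrow> rinv N A 0 a b = (if a = b \<and> b < N then 1 / A 0 a a else 0)"
  by (subst rinv.simps) auto

lemma twisted_rinv:
  assumes "twisted N A"
  shows "twisted N (rinv N A)"
proof -
  have "rinv N A n a b \<noteq> 0 \<longrightarrow> n mod int N = (int a - int b) mod int N" for n a b
  proof (induction "nat (- n)" arbitrary: n a b rule: less_induct)
    case less
    show ?case
    proof
      assume nz: "rinv N A n a b \<noteq> 0"
      show "n mod int N = (int a - int b) mod int N"
      proof (cases "n = 0")
        case False
        with nz have "(\<Sum>p\<in>{n..-1}. \<Sum>c<N. A p a c * rinv N A (n - p) c b) \<noteq> 0"
          by (subst (asm) rinv.simps) (auto split: if_splits)
        then obtain p where p: "p \<in> {n..-1}" and "(\<Sum>c<N. A p a c * rinv N A (n - p) c b) \<noteq> 0"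
          by (rule sum.not_neutral_contains_not_neutral)
        then obtain c where "A p a c * rinv N A (n - p) c b \<noteq> 0"
          using sum.not_neutral_contains_not_neutral by blast
        then have "A p a c \<noteq> 0" "rinv N A (n - p) c b \<noteq> 0" by auto
        moreover have "nat (- (n - p)) < nat (- n)" using p by auto
        ultimately have "p mod int N = (int a - int c) mod int N"
          "(n - p) mod int N = (int c - int b) mod int N"
          using assms less unfolding twisted_def by blast+
        then have "(p + (n - p)) mod int N = ((int a - int c) + (int c - int b)) mod int N"
          by (metis mod_add_cong)
        then show ?thesis by simp
      qed (use nz in \<open>subst (asm) rinv.simps, simp split: if_splits\<close>)
    qed
  qed
  then show ?thesis unfolding twisted_def by blast
qed

lemma in_g_rinv: "twisted N A \<Longrightarrow> in_g N (rinv N A)"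
  unfolding in_g_iff using square_rinv twisted_rinv deg_le_rinv by blast

lemma twisted_constant_diagonal:
  assumes "twisted N X" "square N X" "X 0 a c \<noteq> 0"
  shows "a = c"
proof (rule ccontr)
  assume "a \<noteq> c"
  have "0 mod int N = (int a - int c) mod int N"
    using assms(1,3) unfolding twisted_def by blast
  then have "int N dvd (int a - int c)" by (simp add: dvd_eq_mod_eq_0)
  with \<open>a \<noteq> c\<close> have "\<bar>int N\<bar> \<le> \<bar>int a - int c\<bar>"
    using dvd_imp_le_int[of "int a - int c" "int N"] by simp
  moreover have "a < N" "c < N" using assms(2,3) unfolding square_def by auto
  ultimately show False by arith
qed

lemma lmul_deg_le_0:
  assumes "deg_le 0 X" "deg_le 0 Y"
  shows "lmul N X Y n i j = (\<Sum>k<N. \<Sum>p\<in>{n..0}. X p i k * Y (n - p) k j)"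
  unfolding lmul_Sum_any
  by (rule sum.cong[OF refl], rule Sum_any_eq_sum) (use assms deg_leD in \<open>fastforce+\<close>)

lemma lmul_rinv_right:
  assumes A: "nonpos_unit N A"
  shows "lmul N A (rinv N A) = lone N"
proof (intro ext)
  fix n a b
  let ?R = "rinv N A"
  have dA: "deg_le 0 A" and sA: "square N A" and tA: "twisted N A"
    and diag: "\<And>a. a < N \<Longrightarrow> A 0 a a \<noteq> 0"
    using A unfolding nonpos_unit_def by auto
  show "lmul N A ?R n a b = lone N n a b"
  proof (cases "n \<le> 0 \<and> a < N \<and> b < N")
    case False
    moreover have "lmul N A ?R n a b \<noteq> 0 \<Longrightarrow> n \<le> 0 \<and> a < N \<and> b < N"
      using deg_leD[OF deg_le_lmul[OF dA deg_le_rinv]] square_lmul[OF sA square_rinv, of]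
      unfolding square_def by fastforce
    ultimately show ?thesis unfolding lone_def by auto
  next
    case True
    then have n: "n \<le> 0" and a: "a < N" by auto
    have diag_term: "(\<Sum>c<N. A 0 a c * ?R n c b) = A 0 a a * ?R n a b"
    proof -
      have "(\<Sum>c<N. A 0 a c * ?R n c b) = (\<Sum>c<N. if a = c then A 0 a c * ?R n c b else 0)"
        using twisted_constant_diagonal[OF tA sA, of a] by (intro sum.cong) auto
      then show ?thesis using a by simp
    qed
    have "{n..0} = insert 0 {n..-1}" using n by auto
    then have "lmul N A ?R n a b
        = (\<Sum>c<N. A 0 a c * ?R n c b) + (\<Sum>p\<in>{n..-1}. \<Sum>c<N. A p a c * ?R (n - p) c b)"
      by (simp add: lmul_deg_le_0[OF dA deg_le_rinv] sum.distrib sum.swap[of _ "{..<N}"])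
    also have "\<dots> = lone N n a b"
      unfolding diag_term using True diag[OF a] by (subst rinv.simps) (auto simp: lone_def)
    finally show ?thesis .
  qed
qed

lemma nonpos_unit_rinv:
  assumes "nonpos_unit N A"
  shows "nonpos_unit N (rinv N A)"
  using assms deg_le_rinv square_rinv twisted_rinv rinv_constant
  unfolding nonpos_unit_def by auto

text \<open>A right inverse of a right inverse is the original series, so \<open>rinv\<close> is two-sided.\<close>

lemma rinv_rinv:
  assumes A: "nonpos_unit N A"
  shows "rinv N (rinv N A) = A"
proof -
  let ?R = "rinv N A"
  have dA: "deg_le 0 A" and sA: "square N A" using A unfolding nonpos_unit_def by auto
  have "A = lmul N A (lmul N ?R (rinv N ?R))"
    using lmul_lone_right[OF sA] lmul_rinv_right[OF nonpos_unit_rinv[OF A]] by simp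
  also have "\<dots> = lmul N (lmul N A ?R) (rinv N ?R)"
    by (rule lmul_assoc[symmetric, OF dA deg_le_rinv deg_le_rinv])
  also have "\<dots> = rinv N ?R"
    using lmul_rinv_right[OF A] lmul_lone_left[OF square_rinv] by simp
  finally show ?thesis by simp
qed

lemma lmul_rinv_left: "nonpos_unit N A \<Longrightarrow> lmul N (rinv N A) A = lone N"
  by (metis lmul_rinv_right nonpos_unit_rinv rinv_rinv)

lemma inverse_unique:
  assumes "in_g N Z" "lmul N Z A = lone N" "lmul N A R = lone N"
    and "deg_le 0 A" "deg_le 0 R" "square N R"
  shows "Z = R"
proof -
  obtain B where "deg_le B Z" and sZ: "square N Z" using assms(1) unfolding in_g_iff by blast
  have dZ: "deg_le (max B 0) Z" by (rule deg_le_mono[OF \<open>deg_le B Z\<close>]) simp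
  have dA: "deg_le (max B 0) A" and dR: "deg_le (max B 0) R"
    using assms(4,5) by (auto intro: deg_le_mono)
  have "Z = lmul N Z (lmul N A R)" using assms(3) lmul_lone_right[OF sZ] by simp
  also have "\<dots> = R" using lmul_assoc[OF dZ dA dR, of N] assms(2) lmul_lone_left[OF assms(6)] by simp
  finally show ?thesis .
qed

lemma linv_eq_rinv:
  assumes A: "nonpos_unit N A"
  shows "linv N A = rinv N A"
  unfolding linv_def
proof (rule the_equality)
  have "twisted N A" using A unfolding nonpos_unit_def by simp
  then show "in_g N (rinv N A) \<and> lmul N (rinv N A) A = lone N \<and> lmul N A (rinv N A) = lone N"
    using in_g_rinv lmul_rinv_left[OF A] lmul_rinv_right[OF A] by blast
next
  fix Z assume "in_g N Z \<and> lmul N Z A = lone N \<and> lmul N A Z = lone N"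
  then show "Z = rinv N A"
    using inverse_unique[OF _ _ lmul_rinv_right[OF A]] A deg_le_rinv square_rinv
    unfolding nonpos_unit_def by blast
qed

lemma isCont_rinv:
  assumes cont: "\<And>n a b. isCont (\<lambda>t. A t n a b) t0"
    and diag: "\<And>a. a < N \<Longrightarrow> A t0 0 a a \<noteq> 0"
  shows "isCont (\<lambda>t. rinv N (A t) n a b) t0"
proof (induction "nat (- n)" arbitrary: n a b rule: less_induct)
  case less
  have IH: "isCont (\<lambda>t. rinv N (A t) (n - p) c b) t0" if "p \<in> {n..-1}" for p c
    using less that by auto
  have inv: "isCont (\<lambda>t. 1 / A t 0 a a) t0" if "a < N"
    using cont diag that by (auto intro!: continuous_intros)
  show ?case
  proof (cases "a < N \<and> b < N \<and> n \<le> 0")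
    case True
    then have "(\<lambda>t. rinv N (A t) n a b) = (\<lambda>t. if n = 0 then (if a = b then 1 / A t 0 a a else 0)
        else - (1 / A t 0 a a) * (\<Sum>p\<in>{n..-1}. \<Sum>c<N. A t p a c * rinv N (A t) (n - p) c b))"
      by (intro ext) (subst rinv.simps, simp)
    moreover have "isCont (\<lambda>t. if n = 0 then (if a = b then 1 / A t 0 a a else 0)
        else - (1 / A t 0 a a) * (\<Sum>p\<in>{n..-1}. \<Sum>c<N. A t p a c * rinv N (A t) (n - p) c b)) t0"
      using True inv IH cont diag by (cases "n = 0"; cases "a = b") (auto intro!: continuous_intros)
    ultimately show ?thesis by simp
  next
    case False
    then have "(\<lambda>t. rinv N (A t) n a b) = (\<lambda>t. 0)" by (intro ext) (subst rinv.simps, auto)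
    then show ?thesis by simp
  qed
qed

section \<open>The point of \<open>RT\<^sub>m\<^sub>+\<^sub>1\<close> and the gradients of the coordinates\<close>

lemma twisted_superdiagonal:
  assumes "j = (i + nat (- n)) mod N" "n \<le> -1"
  shows "n mod int N = (int i - int j) mod int N"
proof -
  have "int j = (int i - n) mod int N" using assms by (simp add: zmod_int)
  then have "(int i - int j) mod int N = (int i - (int i - n)) mod int N"
    by (metis mod_diff_right_eq)
  then show ?thesis by simp
qed

lemma nonpos_unit_Umat: "nonpos_unit N (Umat N m \<alpha> c)"
  unfolding nonpos_unit_def deg_le_def square_def twisted_def
proof (intro conjI allI impI)
  fix n i j assume "Umat N m \<alpha> c n i j \<noteq> 0"
  then show "n mod int N = (int i - int j) mod int N"
    by (auto simp: Umat_def lone_def twisted_superdiagonal split: if_splits)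
qed (auto simp: Umat_def lone_def split: if_splits)

lemma Umat_0: "Umat N m \<alpha> c 0 a b = (if a = b \<and> a < N then 1 else 0)"
  unfolding Umat_def lone_def by auto

lemma Umat_neg:
  "1 \<le> r \<Longrightarrow> Umat N m \<alpha> c (- int r) a b =
     (if a < N \<and> b < N \<and> r \<le> m \<and> b = (a + r) mod N then - \<alpha> * c r a else 0)"
  unfolding Umat_def lone_def by auto

definition Uinv :: "nat \<Rightarrow> nat \<Rightarrow> real \<Rightarrow> (nat \<Rightarrow> nat \<Rightarrow> real) \<Rightarrow> lmat" where
  "Uinv N m \<alpha> c = rinv N (Umat N m \<alpha> c)"

lemma RTpt_eq: "RTpt N m \<alpha> d c = (Lmat N \<alpha> d, Uinv N m \<alpha> c)"
  unfolding RTpt_def Uinv_def linv_eq_rinv[OF nonpos_unit_Umat] ..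

lemma nonpos_unit_Uinv: "nonpos_unit N (Uinv N m \<alpha> c)"
  unfolding Uinv_def by (rule nonpos_unit_rinv[OF nonpos_unit_Umat])

lemma deg_le_Umat: "deg_le 0 (Umat N m \<alpha> c)"
  and square_Umat: "square N (Umat N m \<alpha> c)"
  and twisted_Umat: "twisted N (Umat N m \<alpha> c)"
  and deg_le_Uinv: "deg_le 0 (Uinv N m \<alpha> c)"
  using nonpos_unit_Umat nonpos_unit_Uinv unfolding nonpos_unit_def by auto

lemma lmul_Umat_Uinv: "lmul N (Umat N m \<alpha> c) (Uinv N m \<alpha> c) = lone N"
  unfolding Uinv_def by (rule lmul_rinv_right[OF nonpos_unit_Umat])

lemma lmul_Uinv_Umat: "lmul N (Uinv N m \<alpha> c) (Umat N m \<alpha> c) = lone N"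
  unfolding Uinv_def by (rule lmul_rinv_left[OF nonpos_unit_Umat])

lemma rinv_Uinv: "rinv N (Uinv N m \<alpha> c) = Umat N m \<alpha> c"
  unfolding Uinv_def by (rule rinv_rinv[OF nonpos_unit_Umat])

lemma Uinv_0: "a < N \<Longrightarrow> Uinv N m \<alpha> c 0 a b = (if a = b \<and> b < N then 1 else 0)"
  unfolding Uinv_def by (simp add: rinv_constant Umat_0)

text \<open>\<open>Eshift N j k\<close> is \<open>\<lambda>\<^sup>j E\<^sub>k\<^sub>+\<^sub>j\<^sub>,\<^sub>k\<close>; pairing with it extracts the coefficient that defines
  \<open>c\<^sub>k\<^sup>(\<^sup>j\<^sup>)\<close>.\<close>

definition Eshift :: "nat \<Rightarrow> nat \<Rightarrow> nat \<Rightarrow> lmat" where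
  "Eshift N j k = (\<lambda>n a b. if n = int j \<and> a = (k + j) mod N \<and> b = k then 1 else 0)"

lemma deg_le_Eshift: "deg_le (int j) (Eshift N j k)"
  unfolding deg_le_def Eshift_def by auto

lemma square_Eshift: "k < N \<Longrightarrow> square N (Eshift N j k)"
  unfolding square_def Eshift_def by auto

lemma twisted_Eshift: "twisted N (Eshift N j k)"
  unfolding twisted_def Eshift_def
proof (intro allI impI)
  fix n a b assume "(if n = int j \<and> a = (k + j) mod N \<and> b = k then 1 else 0) \<noteq> (0::real)"
  then have e: "n = int j" "a = (k + j) mod N" "b = k" by (auto split: if_splits)
  have "(int a - int b) mod int N = ((int k + int j) mod int N - int k) mod int N"
    using e by (simp add: zmod_int)
  also have "\<dots> = (int k + int j - int k) mod int N" by (rule mod_diff_left_eq)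
  finally show "n mod int N = (int a - int b) mod int N" using e by simp
qed

lemma lpair_Eshift: "k < N \<Longrightarrow> lpair N (Eshift N j k) Z = Z (- int j) k ((k + j) mod N)"
  using lpair_delta[of "(k + j) mod N" N k "int j" 1 Z] unfolding Eshift_def by simp

definition grad_d :: "real \<Rightarrow> nat \<Rightarrow> lmat" where
  "grad_d \<alpha> k = (\<lambda>n a b. if n = 0 \<and> a = k \<and> b = k then 1 / \<alpha> else 0)"

text \<open>The derivative of \<open>U = (U\<^sup>-\<^sup>1)\<^sup>-\<^sup>1\<close> along \<open>V\<close> is \<open>- U V U\<close>, and only the non-positive part of
  \<open>V\<close> enters \<open>c\<^sub>k\<^sup>(\<^sup>j\<^sup>)\<close>; hence the projection to non-negative degrees.\<close>

definition grad_c :: "nat \<Rightarrow> nat \<Rightarrow> real \<Rightarrow> (nat \<Rightarrow> nat \<Rightarrow> real) \<Rightarrow> nat \<Rightarrow> nat \<Rightarrow> lmat" where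
  "grad_c N m \<alpha> c j k = (\<lambda>n a b. if 0 \<le> n then
     lmul N (lmul N (Umat N m \<alpha> c) (Eshift N j k)) (Umat N m \<alpha> c) n a b / \<alpha> else 0)"

lemma in_g_grad_d: "k < N \<Longrightarrow> in_g N (grad_d \<alpha> k)"
  unfolding in_g_def grad_d_def by auto

lemma lpair_grad_d: "k < N \<Longrightarrow> lpair N (grad_d \<alpha> k) V = V 0 k k / \<alpha>"
  using lpair_delta[of k N k 0 "1 / \<alpha>" V] unfolding grad_d_def by simp

lemma grad_c_nonzeroD:
  assumes "grad_c N m \<alpha> c j k n a b \<noteq> 0"
  shows "lmul N (lmul N (Umat N m \<alpha> c) (Eshift N j k)) (Umat N m \<alpha> c) n a b \<noteq> 0"
  using assms unfolding grad_c_def by (auto split: if_splits)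

lemma deg_le_grad_c: "deg_le (int j) (grad_c N m \<alpha> c j k)"
proof -
  have "deg_le (0 + int j + 0) (lmul N (lmul N (Umat N m \<alpha> c) (Eshift N j k)) (Umat N m \<alpha> c))"
    by (intro deg_le_lmul deg_le_Umat deg_le_Eshift)
  then show ?thesis unfolding deg_le_def using grad_c_nonzeroD by fastforce
qed

lemma in_g_grad_c:
  assumes "k < N"
  shows "in_g N (grad_c N m \<alpha> c j k)"
proof -
  have "square N (lmul N (lmul N (Umat N m \<alpha> c) (Eshift N j k)) (Umat N m \<alpha> c))"
    "twisted N (lmul N (lmul N (Umat N m \<alpha> c) (Eshift N j k)) (Umat N m \<alpha> c))"
    by (intro square_lmul twisted_lmul square_Umat twisted_Umat square_Eshift twisted_Eshift assms)+
  then have "square N (grad_c N m \<alpha> c j k)" "twisted N (grad_c N m \<alpha> c j k)"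
    unfolding square_def twisted_def using grad_c_nonzeroD by blast+
  then show ?thesis using deg_le_grad_c unfolding in_g_iff by blast
qed

lemma lpair_truncate:
  "lpair N (\<lambda>n a b. if 0 \<le> n then X n a b else 0) V = lpair N X (ltrunc V)"
  unfolding lpair_Sum_any ltrunc_def
  by (intro sum.cong refl arg_cong[where f=Sum_any] ext) auto

lemma lpair_grad_c:
  assumes "k < N"
  shows "lpair N (grad_c N m \<alpha> c j k) V
    = lmul N (lmul N (Umat N m \<alpha> c) (ltrunc V)) (Umat N m \<alpha> c) (- int j) k ((k + j) mod N) / \<alpha>"
proof -
  let ?U = "Umat N m \<alpha> c" and ?F = "Eshift N j k" and ?V = "ltrunc V"
  have dV: "deg_le 0 ?V" unfolding deg_le_def ltrunc_def by simp
  have "deg_le 0 (lmul N ?U ?V)" using deg_le_lmul[OF deg_le_Umat dV] by simp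
  moreover have "deg_le (int j) (lmul N ?U ?F)" using deg_le_lmul[OF deg_le_Umat deg_le_Eshift] by simp
  ultimately have d: "deg_le (int j) ?U" "deg_le (int j) ?F" "deg_le (int j) ?V"
    "deg_le (int j) (lmul N ?U ?V)" "deg_le (int j) (lmul N ?U ?F)"
    using deg_le_Umat deg_le_Eshift dV deg_le_mono[of 0 _ "int j"] by auto
  have e: "grad_c N m \<alpha> c j k
      = (\<lambda>n a b. (1 / \<alpha>) * (if 0 \<le> n then lmul N (lmul N ?U ?F) ?U n a b else 0))"
    unfolding grad_c_def by (intro ext) simp
  have "lpair N (grad_c N m \<alpha> c j k) V = lpair N (lmul N (lmul N ?U ?F) ?U) ?V / \<alpha>"
    unfolding e lpair_smult_left lpair_truncate by simp
  also have "lpair N (lmul N (lmul N ?U ?F) ?U) ?V = lpair N (lmul N ?U ?F) (lmul N ?U ?V)"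
    by (rule lpair_lmul_assoc[OF d(5,1,3)])
  also have "\<dots> = lpair N ?F (lmul N (lmul N ?U ?V) ?U)"
    by (rule lpair_lmul_cyclic[OF d(1,2,4)])
  finally show ?thesis by (simp add: lpair_Eshift[OF assms])
qed

lemma isCont_lmul:
  assumes "\<And>t. deg_le 0 (X t)" "\<And>t. deg_le 0 (Y t)"
    and "\<And>n a b. isCont (\<lambda>t. X t n a b) t0" "\<And>n a b. isCont (\<lambda>t. Y t n a b) t0"
  shows "isCont (\<lambda>t. lmul N (X t) (Y t) n a b) t0"
  by (simp only: lmul_deg_le_0[OF assms(1,2)]) (intro continuous_intros assms(3,4))

lemma rinv_resolvent:
  assumes A: "nonpos_unit N A" and B: "nonpos_unit N B"
  shows "rinv N A = (\<lambda>n a b. rinv N B n a b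
           - lmul N (lmul N (rinv N A) (\<lambda>n a b. A n a b - B n a b)) (rinv N B) n a b)"
proof -
  let ?RA = "rinv N A" and ?RB = "rinv N B" and ?D = "\<lambda>n a b. A n a b - B n a b"
  have dA: "deg_le 0 A" and dB: "deg_le 0 B" and sB: "square N B"
    using A B unfolding nonpos_unit_def by auto
  have dD: "deg_le 0 ?D" using deg_le_add[OF dA deg_le_smult[OF dB, of "-1"]] by simp
  have dRAD: "deg_le 0 (lmul N ?RA ?D)" using deg_le_lmul[OF deg_le_rinv dD] by simp
  have "lmul N ?RA (\<lambda>n a b. A n a b - ?D n a b)
      = (\<lambda>n a b. lmul N ?RA A n a b - lmul N ?RA ?D n a b)"
    by (rule lmul_diff_right[OF deg_le_rinv dA dD])
  then have RA_B: "lmul N ?RA B = (\<lambda>n a b. lone N n a b - lmul N ?RA ?D n a b)"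
    by (simp add: lmul_rinv_left[OF A])
  have "?RA = lmul N ?RA (lmul N B ?RB)"
    using lmul_rinv_right[OF B] lmul_lone_right[OF square_rinv] by simp
  also have "\<dots> = lmul N (lmul N ?RA B) ?RB" by (rule lmul_assoc[symmetric, OF deg_le_rinv dB deg_le_rinv])
  also have "\<dots> = (\<lambda>n a b. ?RB n a b - lmul N (lmul N ?RA ?D) ?RB n a b)"
    unfolding RA_B
    by (simp add: lmul_diff_left[OF deg_le_lone dRAD deg_le_rinv] lmul_lone_left[OF square_rinv])
  finally show ?thesis .
qed

lemma eventually_nonpos_unit_add:
  assumes A: "nonpos_unit N A" and V: "deg_le 0 V" "square N V" "twisted N V"
  shows "\<forall>\<^sub>F t in at 0. nonpos_unit N (\<lambda>n a b. A n a b + t * V n a b)"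
proof -
  have dA: "deg_le 0 A" and sA: "square N A" and tA: "twisted N A"
    using A unfolding nonpos_unit_def by auto
  have nz: "A n a b \<noteq> 0 \<or> V n a b \<noteq> 0" if "A n a b + t * V n a b \<noteq> 0" for t n a b
    using that by auto
  have AV: "square N (\<lambda>n a b. A n a b + t * V n a b)" "twisted N (\<lambda>n a b. A n a b + t * V n a b)"
    "deg_le 0 (\<lambda>n a b. A n a b + t * V n a b)" for t
  proof -
    show "square N (\<lambda>n a b. A n a b + t * V n a b)" using sA V(2) nz unfolding square_def by blast
    show "twisted N (\<lambda>n a b. A n a b + t * V n a b)" using tA V(3) nz unfolding twisted_def by blast
    show "deg_le 0 (\<lambda>n a b. A n a b + t * V n a b)" by (rule deg_le_add[OF dA deg_le_smult[OF V(1)]])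
  qed
  have "\<forall>\<^sub>F t in at 0. A 0 a a + t * V 0 a a \<noteq> 0" if "a < N" for a
    using A that unfolding nonpos_unit_def
    by (intro tendsto_imp_eventually_ne[of _ "A 0 a a"]) (auto intro!: tendsto_eq_intros)
  then have "\<forall>\<^sub>F t in at 0. \<forall>a\<in>{..<N}. A 0 a a + t * V 0 a a \<noteq> 0"
    by (intro eventually_ball_finite) auto
  then show ?thesis by (rule eventually_mono) (simp add: nonpos_unit_def AV)
qed

text \<open>The resolvent identity \<open>(U\<^sup>-\<^sup>1 + t V)\<^sup>-\<^sup>1 = U - t (U\<^sup>-\<^sup>1 + t V)\<^sup>-\<^sup>1 V U\<close> makes the difference
  quotient of a \<open>c\<close>-coordinate continuous in \<open>t\<close>.\<close>

lemma has_real_derivative_coordinate_c: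
  assumes al: "\<alpha> \<noteq> 0" and kN: "k < N" and V: "in_g N V"
  shows "((\<lambda>t. coordfun N \<alpha> (Cc j k) (L, ladd (Uinv N m \<alpha> c) (lsmul t V)))
            has_real_derivative lpair N (grad_c N m \<alpha> c j k) V) (at 0)"
proof -
  let ?U = "Umat N m \<alpha> c" and ?Y = "Uinv N m \<alpha> c" and ?K = "(k + j) mod N"
  define Vm where "Vm = ltrunc V"
  define At where "At t = (\<lambda>n a b. ?Y n a b + t * Vm n a b)" for t
  define f where "f t = coordfun N \<alpha> (Cc j k) (L, ladd ?Y (lsmul t V))" for t
  define g where "g t = lmul N (lmul N (rinv N (At t)) Vm) ?U (- int j) k ?K / \<alpha>" for t
  have dVm: "deg_le 0 Vm" unfolding Vm_def deg_le_def ltrunc_def by auto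
  have Vm: "square N Vm" "twisted N Vm"
    using V unfolding in_g_iff Vm_def square_def twisted_def ltrunc_def by auto
  have At0: "At 0 = ?Y" unfolding At_def by simp
  have f_eq: "f t = - rinv N (At t) (- int j) k ?K / \<alpha>" if "nonpos_unit N (At t)" for t
  proof -
    have "ltrunc (ladd ?Y (lsmul t V)) = At t"
      using deg_le_Uinv unfolding ltrunc_def ladd_def lsmul_def At_def Vm_def deg_le_def
      by (intro ext) auto
    then show ?thesis unfolding f_def coordfun_def using linv_eq_rinv[OF that] by simp
  qed
  have "\<forall>\<^sub>F t in at (0::real). t \<noteq> 0" by (auto simp: eventually_at_filter)
  then have quotient: "\<forall>\<^sub>F t in at 0. (f t - f 0) / (t - 0) = g t"
    using eventually_nonpos_unit_add[OF nonpos_unit_Uinv[of N m \<alpha> c] dVm Vm]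
  proof eventually_elim
    case (elim t)
    then have ut: "nonpos_unit N (At t)" unfolding At_def by simp
    have diff: "(\<lambda>n a b. At t n a b - ?Y n a b) = (\<lambda>n a b. t * Vm n a b)" unfolding At_def by simp
    have "rinv N (At t) = (\<lambda>n a b. ?U n a b - t * lmul N (lmul N (rinv N (At t)) Vm) ?U n a b)"
      using rinv_resolvent[OF ut nonpos_unit_Uinv[of N m \<alpha> c]]
      unfolding rinv_Uinv diff lmul_smult_right lmul_smult_left .
    from this[THEN fun_cong, THEN fun_cong, THEN fun_cong, of "- int j" k ?K]
    show ?case using f_eq[OF ut] f_eq[of 0] elim(1) al nonpos_unit_Uinv
      unfolding g_def At0 rinv_Uinv by (simp add: field_simps)
  qed
  have "isCont g 0"
  proof -
    have "isCont (\<lambda>t. rinv N (At t) n a b) 0" for n a b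
      using Uinv_0 unfolding At_def by (intro isCont_rinv continuous_intros) auto
    then show ?thesis unfolding g_def using al
      by (intro continuous_intros isCont_lmul deg_le_lmul[OF deg_le_rinv dVm, simplified]
          deg_le_Umat deg_le_rinv dVm continuous_const)
  qed
  moreover have "g 0 = lpair N (grad_c N m \<alpha> c j k) V"
    unfolding g_def At0 rinv_Uinv Vm_def lpair_grad_c[OF kN] ..
  ultimately have "((\<lambda>t. (f t - f 0) / (t - 0)) \<longlongrightarrow> lpair N (grad_c N m \<alpha> c j k) V) (at 0)"
    using tendsto_cong[OF quotient] unfolding isCont_def by simp
  then show ?thesis unfolding f_def has_field_derivative_iff by simp
qed

lemma lpair_nondegenerate:
  assumes G: "in_g N G" and G': "in_g N G'" and eq: "\<And>V. in_g N V \<Longrightarrow> lpair N G V = lpair N G' V"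
  shows "G = G'"
proof (intro ext)
  fix n i j
  show "G n i j = G' n i j"
  proof (cases "G n i j = 0 \<and> G' n i j = 0")
    case False
    then have ij: "i < N" "j < N" and tw: "n mod int N = (int i - int j) mod int N"
      using G G' unfolding in_g_def by blast+
    define E where "E = (\<lambda>n' a b. if n' = - n \<and> a = j \<and> b = i then 1 else (0::real))"
    have "(- n) mod int N = (int j - int i) mod int N"
      using tw by (metis minus_diff_eq mod_minus_eq)
    then have "in_g N E" using ij unfolding in_g_def E_def by (auto intro: exI[of _ "- n"])
    moreover have "lpair N X E = X n i j" for X
      using lpair_delta[OF ij(2,1), of "- n" 1 X] unfolding E_def by (simp add: lpair_commute)
    ultimately show ?thesis using eq by metis
  qed simp
qed

lemma has_grad_unique:
  assumes "has_grad N \<Phi> P G" "has_grad N \<Phi> P G'"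
  shows "G = G'"
proof -
  have "fst G = fst G'" "snd G = snd G'"
    by (rule lpair_nondegenerate; use assms in \<open>auto simp: has_grad_def intro: DERIV_unique\<close>)+
  then show ?thesis by (simp add: prod_eq_iff)
qed

lemma grad_eqI: "has_grad N \<Phi> P G \<Longrightarrow> grad N \<Phi> P = G"
  unfolding grad_def using has_grad_unique by blast

lemma has_grad_d:
  assumes kN: "k < N" and al: "\<alpha> \<noteq> 0"
  shows "has_grad N (coordfun N \<alpha> (Dc k)) (RTpt N m \<alpha> d c) (grad_d \<alpha> k, lzero)"
  unfolding has_grad_def RTpt_eq fst_conv snd_conv
proof (intro conjI allI impI)
  fix V :: lmat
  have "((\<lambda>t. (Lmat N \<alpha> d 0 k k + t * V 0 k k - 1) / \<alpha>) has_real_derivative V 0 k k / \<alpha>) (at 0)"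
    using al by (auto intro!: derivative_eq_intros)
  then show "((\<lambda>t. coordfun N \<alpha> (Dc k) (ladd (Lmat N \<alpha> d) (lsmul t V), Uinv N m \<alpha> c))
      has_real_derivative lpair N (grad_d \<alpha> k) V) (at 0)"
    by (simp add: coordfun_def ladd_def lsmul_def lpair_grad_d[OF kN])
  show "((\<lambda>t. coordfun N \<alpha> (Dc k) (Lmat N \<alpha> d, ladd (Uinv N m \<alpha> c) (lsmul t V)))
      has_real_derivative lpair N lzero V) (at 0)"
    by (simp add: coordfun_def lzero_def lpair_Sum_any)
qed (auto simp: in_g_lzero in_g_grad_d kN)

lemma has_grad_c:
  assumes kN: "k < N" and al: "\<alpha> \<noteq> 0"
  shows "has_grad N (coordfun N \<alpha> (Cc j k)) (RTpt N m \<alpha> d c) (lzero, grad_c N m \<alpha> c j k)"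
  unfolding has_grad_def RTpt_eq fst_conv snd_conv
proof (intro conjI allI impI)
  fix V :: lmat
  show "((\<lambda>t. coordfun N \<alpha> (Cc j k) (ladd (Lmat N \<alpha> d) (lsmul t V), Uinv N m \<alpha> c))
      has_real_derivative lpair N lzero V) (at 0)"
    by (simp add: coordfun_def lzero_def lpair_Sum_any)
  assume "in_g N V"
  then show "((\<lambda>t. coordfun N \<alpha> (Cc j k) (Lmat N \<alpha> d, ladd (Uinv N m \<alpha> c) (lsmul t V)))
      has_real_derivative lpair N (grad_c N m \<alpha> c j k) V) (at 0)"
    by (rule has_real_derivative_coordinate_c[OF al kN])
qed (auto simp: in_g_lzero in_g_grad_c kN)

lemma grad_d: "k < N \<Longrightarrow> \<alpha> \<noteq> 0 \<Longrightarrow>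
    grad N (coordfun N \<alpha> (Dc k)) (RTpt N m \<alpha> d c) = (grad_d \<alpha> k, lzero)"
  by (rule grad_eqI[OF has_grad_d])

lemma grad_c: "k < N \<Longrightarrow> \<alpha> \<noteq> 0 \<Longrightarrow>
    grad N (coordfun N \<alpha> (Cc j k)) (RTpt N m \<alpha> d c) = (lzero, grad_c N m \<alpha> c j k)"
  by (rule grad_eqI[OF has_grad_c])

lemma ex1_has_grad:
  assumes "valid_coord N m x" "\<alpha> \<noteq> 0"
  shows "\<exists>!G. has_grad N (coordfun N \<alpha> x) (RTpt N m \<alpha> d c) G"
proof -
  have "\<exists>G. has_grad N (coordfun N \<alpha> x) (RTpt N m \<alpha> d c) G"
  proof (cases x)
    case (Dc k)
    then show ?thesis using assms has_grad_d[of k N \<alpha> m d c] unfolding valid_coord_def by auto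
  next
    case (Cc j k)
    then show ?thesis using assms has_grad_c[of k N \<alpha> j m d c] unfolding valid_coord_def by auto
  qed
  then show ?thesis using has_grad_unique by blast
qed

abbreviation diag_entry :: "nat \<Rightarrow> real \<Rightarrow> nat \<Rightarrow> nat \<Rightarrow> real" where
  "diag_entry a v \<equiv> (\<lambda>x y. if x = a \<and> y = a then v else 0)"

lemma deg_le_Lmat: "deg_le 1 (Lmat N \<alpha> d)"
  and deg_ge_Lmat: "deg_ge 0 (Lmat N \<alpha> d)"
  and deg_le_grad_d: "deg_le 0 (grad_d \<alpha> k)"
  and deg_ge_grad_d: "deg_ge 0 (grad_d \<alpha> k)"
  unfolding deg_le_def deg_ge_def Lmat_def grad_d_def by auto

lemma lmul_grad_d_Lmat_0:
  assumes "k < N"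
  shows "lmul N (grad_d \<alpha> k) (Lmat N \<alpha> d) 0 = diag_entry k ((1 + \<alpha> * d k) / \<alpha>)"
proof (intro ext)
  fix a b
  have "lmul N (grad_d \<alpha> k) (Lmat N \<alpha> d) 0 a b
      = (\<Sum>e<N. if e = k then (if a = k \<and> b = k then (1 + \<alpha> * d k) / \<alpha> else 0) else 0)"
    unfolding lmul_Sum_any
    by (intro sum.cong refl, subst Sum_any_single[of 0]) (auto simp: grad_d_def Lmat_def)
  then show "lmul N (grad_d \<alpha> k) (Lmat N \<alpha> d) 0 a b = diag_entry k ((1 + \<alpha> * d k) / \<alpha>) a b"
    using assms by simp
qed

lemma lmul_Lmat_grad_d_0:
  assumes "k < N"
  shows "lmul N (Lmat N \<alpha> d) (grad_d \<alpha> k) 0 = diag_entry k ((1 + \<alpha> * d k) / \<alpha>)"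
proof (intro ext)
  fix a b
  have "lmul N (Lmat N \<alpha> d) (grad_d \<alpha> k) 0 a b
      = (\<Sum>e<N. if e = k then (if a = k \<and> b = k then (1 + \<alpha> * d k) / \<alpha> else 0) else 0)"
    unfolding lmul_Sum_any
    by (intro sum.cong refl, subst Sum_any_single[of 0]) (auto simp: grad_d_def Lmat_def)
  then show "lmul N (Lmat N \<alpha> d) (grad_d \<alpha> k) 0 a b = diag_entry k ((1 + \<alpha> * d k) / \<alpha>) a b"
    using assms by simp
qed

lemma lmul_Umat_Eshift:
  assumes "k < N"
  shows "lmul N (Umat N m \<alpha> c) (Eshift N j k) n a b
    = (if b = k then Umat N m \<alpha> c (n - int j) a ((k + j) mod N) else 0)"
proof -
  have "lmul N (Umat N m \<alpha> c) (Eshift N j k) n a b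
      = (\<Sum>e<N. if e = (k + j) mod N then (if b = k then Umat N m \<alpha> c (n - int j) a e else 0) else 0)"
    unfolding lmul_Sum_any
    by (intro sum.cong refl, subst Sum_any_single[of "n - int j"]) (auto simp: Eshift_def)
  then show ?thesis using assms by simp
qed

lemma lmul_Eshift_Umat:
  assumes "k < N"
  shows "lmul N (Eshift N j k) (Umat N m \<alpha> c) n a b
    = (if a = (k + j) mod N then Umat N m \<alpha> c (n - int j) k b else 0)"
proof -
  have "lmul N (Eshift N j k) (Umat N m \<alpha> c) n a b
      = (\<Sum>e<N. if e = k then (if a = (k + j) mod N then Umat N m \<alpha> c (n - int j) e b else 0) else 0)"
    unfolding lmul_Sum_any
    by (intro sum.cong refl, subst Sum_any_single[of "int j"]) (auto simp: Eshift_def)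
  then show ?thesis using assms by simp
qed

text \<open>With \<open>M = U \<lambda>\<^sup>j E\<^sub>k\<^sub>+\<^sub>j\<^sub>,\<^sub>k U\<close>, the gradient is \<open>(M - P\<^sub><\<^sub>0 M)/\<alpha>\<close>; multiplying by \<open>U\<^sup>-\<^sup>1\<close>
  cancels one \<open>U\<close> in \<open>M\<close> and leaves a correction of negative degree.\<close>

lemma lmul_grad_c_Uinv:
  fixes m j :: nat and \<alpha> :: real and c :: "nat \<Rightarrow> nat \<Rightarrow> real"
  assumes "k < N"
  defines "M \<equiv> lmul N (lmul N (Umat N m \<alpha> c) (Eshift N j k)) (Umat N m \<alpha> c)"
  shows "lmul N (grad_c N m \<alpha> c j k) (Uinv N m \<alpha> c) = (\<lambda>n a b. (1 / \<alpha>) *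
      (lmul N (Umat N m \<alpha> c) (Eshift N j k) n a b - lmul N (Pneg M) (Uinv N m \<alpha> c) n a b))"
proof -
  let ?U = "Umat N m \<alpha> c" and ?Y = "Uinv N m \<alpha> c" and ?F = "Eshift N j k"
  have dM: "deg_le (int j) M" using deg_le_lmul[OF deg_le_lmul[OF deg_le_Umat deg_le_Eshift] deg_le_Umat]
    unfolding M_def by simp
  have dN: "deg_le (int j) (Pneg M)" unfolding deg_le_def Pneg_def by auto
  have "lmul N M ?Y = lmul N (lmul N ?U ?F) (lmul N ?U ?Y)"
    unfolding M_def by (rule lmul_assoc) (auto intro: deg_le_mono[OF deg_le_Umat]
        deg_le_mono[OF deg_le_Uinv] deg_le_mono[OF deg_le_lmul[OF deg_le_Umat deg_le_Eshift]])
  also have "\<dots> = lmul N ?U ?F"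
    unfolding lmul_Umat_Uinv by (intro lmul_lone_right square_lmul square_Umat square_Eshift assms)
  finally have MY: "lmul N M ?Y = lmul N ?U ?F" .
  have "grad_c N m \<alpha> c j k = (\<lambda>n a b. (1 / \<alpha>) * (M n a b - Pneg M n a b))"
    unfolding grad_c_def M_def Pneg_def by (intro ext) auto
  then show ?thesis
    by (simp only: lmul_smult_left lmul_diff_left[OF dM dN deg_le_Uinv] MY)
qed

lemma lmul_Uinv_grad_c:
  fixes m j :: nat and \<alpha> :: real and c :: "nat \<Rightarrow> nat \<Rightarrow> real"
  assumes "k < N"
  defines "M \<equiv> lmul N (lmul N (Umat N m \<alpha> c) (Eshift N j k)) (Umat N m \<alpha> c)"
  shows "lmul N (Uinv N m \<alpha> c) (grad_c N m \<alpha> c j k) = (\<lambda>n a b. (1 / \<alpha>) *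
      (lmul N (Eshift N j k) (Umat N m \<alpha> c) n a b - lmul N (Uinv N m \<alpha> c) (Pneg M) n a b))"
proof -
  let ?U = "Umat N m \<alpha> c" and ?Y = "Uinv N m \<alpha> c" and ?F = "Eshift N j k"
  have dM: "deg_le (int j) M" using deg_le_lmul[OF deg_le_lmul[OF deg_le_Umat deg_le_Eshift] deg_le_Umat]
    unfolding M_def by simp
  have dN: "deg_le (int j) (Pneg M)" unfolding deg_le_def Pneg_def by auto
  have d: "deg_le (int j) ?U" "deg_le (int j) ?Y" "deg_le (int j) ?F" "deg_le (int j) (lmul N ?F ?U)"
    using deg_le_lmul[OF deg_le_Eshift deg_le_Umat]
    by (auto intro: deg_le_mono[OF deg_le_Umat] deg_le_mono[OF deg_le_Uinv] deg_le_Eshift)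
  have "lmul N ?Y M = lmul N ?Y (lmul N ?U (lmul N ?F ?U))"
    unfolding M_def by (simp add: lmul_assoc[OF d(1,3,1)])
  also have "\<dots> = lmul N (lmul N ?Y ?U) (lmul N ?F ?U)" by (simp add: lmul_assoc[OF d(2,1,4)])
  also have "\<dots> = lmul N ?F ?U"
    unfolding lmul_Uinv_Umat by (intro lmul_lone_left square_lmul square_Umat square_Eshift assms)
  finally have YM: "lmul N ?Y M = lmul N ?F ?U" .
  have "grad_c N m \<alpha> c j k = (\<lambda>n a b. (1 / \<alpha>) * (M n a b - Pneg M n a b))"
    unfolding grad_c_def M_def Pneg_def by (intro ext) auto
  then show ?thesis
    by (simp only: lmul_smult_right lmul_diff_right[OF deg_le_Uinv dM dN] YM)
qed

lemma lmul_grad_c_Uinv_nonneg: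
  "k < N \<Longrightarrow> 0 \<le> n \<Longrightarrow> lmul N (grad_c N m \<alpha> c j k) (Uinv N m \<alpha> c) n a b
    = lmul N (Umat N m \<alpha> c) (Eshift N j k) n a b / \<alpha>"
  unfolding lmul_grad_c_Uinv
  using deg_leD[OF deg_le_lmul[OF _ deg_le_Uinv], of "-1" "Pneg _"] by (fastforce simp: deg_le_def Pneg_def)

lemma lmul_Uinv_grad_c_nonneg:
  "k < N \<Longrightarrow> 0 \<le> n \<Longrightarrow> lmul N (Uinv N m \<alpha> c) (grad_c N m \<alpha> c j k) n a b
    = lmul N (Eshift N j k) (Umat N m \<alpha> c) n a b / \<alpha>"
  unfolding lmul_Uinv_grad_c
  using deg_leD[OF deg_le_lmul[OF deg_le_Uinv], of "-1" "Pneg _"] by (fastforce simp: deg_le_def Pneg_def)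

lemma Umat_col:
  assumes "k < N" "1 \<le> i" "i \<le> m"
  shows "Umat N m \<alpha> c (- int i) a ((k + i) mod N) = (if a = k then - \<alpha> * c i k else 0)"
proof -
  have "a = k" if "a < N" "(k + i) mod N = (a + i) mod N"
  proof -
    have "int ((a + i) mod N) = int ((k + i) mod N)" using that(2) by simp
    then have "(int a + int i - int i) mod int N = (int k + int i - int i) mod int N"
      by (metis mod_diff_cong of_nat_add zmod_int)
    then show ?thesis using that(1) assms(1) by (simp add: zmod_int)
  qed
  then show ?thesis using assms by (auto simp: Umat_neg)
qed

lemma Umat_row:
  "k < N \<Longrightarrow> 1 \<le> i \<Longrightarrow> i \<le> m \<Longrightarrow>
    Umat N m \<alpha> c (- int i) k b = (if b = (k + i) mod N then - \<alpha> * c i k else 0)"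
  by (auto simp: Umat_neg)

lemma lmul_grad_c_Uinv_0:
  assumes "k < N" "1 \<le> i" "i \<le> m" "\<alpha> \<noteq> 0"
  shows "lmul N (grad_c N m \<alpha> c i k) (Uinv N m \<alpha> c) 0 = diag_entry k (- c i k)"
  using assms by (intro ext) (simp add: lmul_grad_c_Uinv_nonneg lmul_Umat_Eshift Umat_col)

lemma lmul_Uinv_grad_c_0:
  assumes "k < N" "1 \<le> i" "i \<le> m" "\<alpha> \<noteq> 0"
  shows "lmul N (Uinv N m \<alpha> c) (grad_c N m \<alpha> c i k) 0 = diag_entry ((k + i) mod N) (- c i k)"
  using assms by (intro ext) (simp add: lmul_Uinv_grad_c_nonneg lmul_Eshift_Umat Umat_row)

section \<open>The bracket for gradients concentrated in one factor\<close>

lemma operators_lzero [simp]: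
  "lmul N lzero X = lzero" "lmul N X lzero = lzero" "P0 lzero = lzero" "R0 lzero = lzero"
  "Wop N lzero = lzero" "Sop N lzero = lzero" "Sst N lzero = lzero" "Aone N lzero = lzero"
  "Atwo N lzero = lzero" "lneg lzero = lzero" "lpair N lzero X = 0" "lpair N X lzero = 0"
  by (auto simp: lzero_def lmul_def lpair_def P0_def Ppos_def Pneg_def R0_def Wop_def Sop_def
      Sst_def Aone_def Atwo_def lneg_def ladd_def intro!: ext)

lemma pb2_fst_fst: "pb2 N P (G, lzero) (H, lzero) = 1/2 * (
      lpair N (Aone N (lmul N G (fst P))) (lmul N H (fst P))
    - lpair N (Atwo N (lmul N (fst P) G)) (lmul N (fst P) H)
    + lpair N (Sop N (lmul N (fst P) G)) (lmul N H (fst P))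
    - lpair N (Sst N (lmul N G (fst P))) (lmul N (fst P) H))"
  by (simp add: pb2_def comp_def bA1_def bA2_def bS_def bSst_def)

lemma pb2_fst_snd: "pb2 N P (G, lzero) (lzero, H) = 1/2 * (
      lpair N (Sst N (lmul N G (fst P))) (lmul N H (snd P))
    - lpair N (Sop N (lmul N (fst P) G)) (lmul N (snd P) H)
    + lpair N (Sop N (lmul N (fst P) G)) (lmul N H (snd P))
    - lpair N (Sst N (lmul N G (fst P))) (lmul N (snd P) H))"
  by (simp add: pb2_def comp_def bA1_def bA2_def bS_def bSst_def)

lemma pb2_snd_fst: "pb2 N P (lzero, G) (H, lzero) = 1/2 * (
      lpair N (lneg (Sop N (lmul N G (snd P)))) (lmul N H (fst P))
    - lpair N (lneg (Sst N (lmul N (snd P) G))) (lmul N (fst P) H)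
    + lpair N (Sop N (lmul N (snd P) G)) (lmul N H (fst P))
    - lpair N (Sst N (lmul N G (snd P))) (lmul N (fst P) H))"
  by (simp add: pb2_def comp_def bA1_def bA2_def bS_def bSst_def)

lemma pb2_snd_snd: "pb2 N P (lzero, G) (lzero, H) = 1/2 * (
      lpair N (Aone N (lmul N G (snd P))) (lmul N H (snd P))
    - lpair N (Atwo N (lmul N (snd P) G)) (lmul N (snd P) H)
    + lpair N (lneg (Sst N (lmul N (snd P) G))) (lmul N H (snd P))
    - lpair N (lneg (Sop N (lmul N G (snd P)))) (lmul N (snd P) H))"
  by (simp add: pb2_def comp_def bA1_def bA2_def bS_def bSst_def)

definition pair0 :: "nat \<Rightarrow> (nat \<Rightarrow> nat \<Rightarrow> real) \<Rightarrow> (nat \<Rightarrow> nat \<Rightarrow> real) \<Rightarrow> real" where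
  "pair0 N X Z = (\<Sum>a<N. \<Sum>b<N. X a b * Z b a)"

definition wpair0 :: "nat \<Rightarrow> (nat \<Rightarrow> nat \<Rightarrow> real) \<Rightarrow> (nat \<Rightarrow> nat \<Rightarrow> real) \<Rightarrow> real" where
  "wpair0 N X Z = (\<Sum>a<N. (\<Sum>k<N. sgn (real k - real a) * X k k) * Z a a)"

lemma lpair_degree_0:
  "(\<And>n a b. n \<noteq> 0 \<Longrightarrow> Q n a b = 0) \<Longrightarrow> lpair N Q Z = (\<Sum>a<N. \<Sum>b<N. Q 0 a b * Z 0 b a)"
  unfolding lpair_Sum_any by (intro sum.cong refl, subst Sum_any_single[of 0]) auto

lemma lpair_Wop: "lpair N (Wop N X) Z = wpair0 N (X 0) (Z 0)"
proof -
  have "lpair N (Wop N X) Z = (\<Sum>a<N. \<Sum>b<N. Wop N X 0 a b * Z 0 b a)"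
    by (rule lpair_degree_0) (simp add: Wop_def)
  also have "\<dots> = wpair0 N (X 0) (Z 0)"
    unfolding wpair0_def Wop_def by (simp add: if_distrib[of "\<lambda>x. x * _"] sum.delta cong: if_cong)
  finally show ?thesis .
qed

lemma lpair_Sop: "lpair N (Sop N X) Z = pair0 N (X 0) (Z 0) - wpair0 N (X 0) (Z 0)"
proof -
  have "lpair N (Sop N X) Z = (\<Sum>a<N. \<Sum>b<N. X 0 a b * Z 0 b a - Wop N X 0 a b * Z 0 b a)"
    by (subst lpair_degree_0) (auto simp: Sop_def ladd_def lneg_def P0_def Wop_def left_diff_distrib)
  also have "\<dots> = pair0 N (X 0) (Z 0) - lpair N (Wop N X) Z"
    by (subst lpair_degree_0[of "Wop N X"]) (auto simp: Wop_def pair0_def sum_subtractf)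
  finally show ?thesis by (simp add: lpair_Wop)
qed

lemma lpair_Sst: "lpair N (Sst N X) Z = pair0 N (X 0) (Z 0) + wpair0 N (X 0) (Z 0)"
proof -
  have "lpair N (Sst N X) Z = (\<Sum>a<N. \<Sum>b<N. X 0 a b * Z 0 b a + Wop N X 0 a b * Z 0 b a)"
    by (subst lpair_degree_0) (auto simp: Sst_def ladd_def P0_def Wop_def distrib_right)
  also have "\<dots> = pair0 N (X 0) (Z 0) + lpair N (Wop N X) Z"
    by (subst lpair_degree_0[of "Wop N X"]) (auto simp: Wop_def pair0_def sum.distrib)
  finally show ?thesis by (simp add: lpair_Wop)
qed

lemma lpair_lneg: "lpair N (lneg X) Z = - lpair N X Z"
  using lpair_smult_left[of N "-1" X Z] unfolding lneg_def by simp

lemma deg_le_R0: "deg_le B X \<Longrightarrow> deg_le B (R0 X)"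
  unfolding deg_le_def R0_def ladd_def lneg_def Ppos_def Pneg_def by auto

lemma lpair_Aone:
  assumes "deg_le B X" "deg_le C Z"
  shows "lpair N (Aone N X) Z = lpair N (R0 X) Z + wpair0 N (X 0) (Z 0)"
proof -
  have "deg_le (max B 0) (R0 X)" "deg_le (max B 0) (Wop N X)"
    using deg_le_R0[OF assms(1)] by (auto simp: deg_le_def Wop_def)
  then show ?thesis
    unfolding Aone_def ladd_def by (simp add: lpair_add_left[OF _ _ assms(2)] lpair_Wop)
qed

lemma lpair_Atwo:
  assumes "deg_le B X" "deg_le C Z"
  shows "lpair N (Atwo N X) Z = lpair N (R0 X) Z - wpair0 N (X 0) (Z 0)"
proof -
  have "deg_le (max B 0) (R0 X)" "deg_le (max B 0) (Wop N X)"
    using deg_le_R0[OF assms(1)] by (auto simp: deg_le_def Wop_def)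
  then show ?thesis
    unfolding Atwo_def ladd_def lneg_def by (simp add: lpair_diff_left[OF _ _ assms(2)] lpair_Wop)
qed

lemma lpair_R0_nonneg_eq_0: "deg_ge 0 X \<Longrightarrow> deg_ge 0 Z \<Longrightarrow> lpair N (R0 X) Z = 0"
  unfolding lpair_Sum_any deg_ge_def R0_def ladd_def lneg_def Ppos_def Pneg_def
  by (intro sum.neutral ballI, subst Sum_any_eq_sum[of "{}"]) auto

lemma lpair_R0:
  assumes "deg_le B X" "deg_le C Z" "0 \<le> B"
  shows "lpair N (R0 X) Z = 2 * lpair N (Ppos X) Z + pair0 N (X 0) (Z 0) - lpair N X Z"
proof -
  have e: "R0 X = (\<lambda>n a b. (2 * Ppos X n a b + P0 X n a b) - X n a b)"
    unfolding R0_def ladd_def lneg_def Ppos_def Pneg_def P0_def by (intro ext) auto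
  have d: "deg_le B (Ppos X)" "deg_le B (P0 X)"
    using assms(1,3) unfolding deg_le_def Ppos_def P0_def by auto
  have "lpair N (R0 X) Z = lpair N (\<lambda>n a b. 2 * Ppos X n a b + P0 X n a b) Z - lpair N X Z"
    unfolding e by (rule lpair_diff_left[OF deg_le_add[OF deg_le_smult[OF d(1)] d(2)] assms(1,2)])
  also have "lpair N (\<lambda>n a b. 2 * Ppos X n a b + P0 X n a b) Z
      = 2 * lpair N (Ppos X) Z + lpair N (P0 X) Z"
    by (simp add: lpair_add_left[OF deg_le_smult[OF d(1)] d(2) assms(2)] lpair_smult_left)
  also have "lpair N (P0 X) Z = pair0 N (X 0) (Z 0)"
    unfolding pair0_def by (subst lpair_degree_0) (simp_all add: P0_def)
  finally show ?thesis .
qed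

lemma lpair_Ppos_eq_sum:
  assumes "deg_le (int B) X"
  shows "lpair N (Ppos X) Y = (\<Sum>a<N. \<Sum>b<N. \<Sum>q\<in>{1..B}. X (int q) a b * Y (- int q) b a)"
proof -
  have "Sum_any (\<lambda>p. Ppos X p a b * Y (- p) b a) = (\<Sum>p\<in>{1..int B}. X p a b * Y (- p) b a)" for a b
  proof -
    have "Sum_any (\<lambda>p. Ppos X p a b * Y (- p) b a) = (\<Sum>p\<in>{1..int B}. Ppos X p a b * Y (- p) b a)"
      by (rule Sum_any_eq_sum) (use deg_leD[OF assms] in \<open>force simp: Ppos_def\<close>)+
    then show ?thesis by (simp add: Ppos_def)
  qed
  moreover have "{1..int B} = int ` {1..B}" by (simp add: image_int_atLeastAtMost)
  ultimately show ?thesis unfolding lpair_Sum_any by (simp add: sum.reindex)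
qed

lemma pair0_diag_entry [simp]:
  assumes "a < N"
  shows "pair0 N (diag_entry a u) (diag_entry b v) = (if a = b then u * v else 0)"
proof -
  have "pair0 N (diag_entry a u) (diag_entry b v)
      = (\<Sum>x<N. \<Sum>y<N. if x = a \<and> y = a then (if a = b then u * v else 0) else 0)"
    unfolding pair0_def by (intro sum.cong refl) auto
  then show ?thesis using sum_sum_delta[OF assms assms] by simp
qed

lemma wpair0_diag_entry [simp]:
  "a < N \<Longrightarrow> b < N \<Longrightarrow> wpair0 N (diag_entry a u) (diag_entry b v) = sgn (real a - real b) * u * v"
  unfolding wpair0_def by (simp add: if_distrib[of "\<lambda>x. _ * x"] sum.delta cong: if_cong)

section \<open>Brackets involving the \<open>d\<close>-coordinates\<close>

lemma rtbr_eq: "rtbr N m \<alpha> d c x y = \<alpha> * pb2 N (Lmat N \<alpha> d, Uinv N m \<alpha> c)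
   (grad N (coordfun N \<alpha> x) (RTpt N m \<alpha> d c)) (grad N (coordfun N \<alpha> y) (RTpt N m \<alpha> d c))"
  unfolding rtbr_def Let_def RTpt_eq ..

lemma rtbr_d_d:
  assumes kN: "k < N" and lN: "l < N" and al: "\<alpha> \<noteq> 0"
  shows "rtbr N m \<alpha> d c (Dc k) (Dc l) = 0"
proof -
  let ?L = "Lmat N \<alpha> d"
  let ?X1 = "lmul N (grad_d \<alpha> k) ?L" and ?X2 = "lmul N ?L (grad_d \<alpha> k)"
  let ?Z1 = "lmul N (grad_d \<alpha> l) ?L" and ?Z2 = "lmul N ?L (grad_d \<alpha> l)"
  have up: "deg_le 1 ?X1" "deg_le 1 ?X2" "deg_le 1 ?Z1" "deg_le 1 ?Z2"
    using deg_le_lmul[OF deg_le_grad_d deg_le_Lmat] deg_le_lmul[OF deg_le_Lmat deg_le_grad_d] by simp_all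
  have low: "deg_ge 0 ?X1" "deg_ge 0 ?X2" "deg_ge 0 ?Z1" "deg_ge 0 ?Z2"
    using deg_ge_lmul[OF deg_ge_grad_d deg_ge_Lmat] deg_ge_lmul[OF deg_ge_Lmat deg_ge_grad_d] by simp_all
  have "?X2 0 = ?X1 0" "?Z2 0 = ?Z1 0"
    by (simp_all add: lmul_grad_d_Lmat_0 lmul_Lmat_grad_d_0 kN lN)
  then show ?thesis
    unfolding rtbr_eq grad_d[OF kN al] grad_d[OF lN al] pb2_fst_fst fst_conv
    by (simp add: lpair_Aone[OF up(1,3)] lpair_Atwo[OF up(2,4)] lpair_Sop lpair_Sst
        lpair_R0_nonneg_eq_0 low pair0_def wpair0_def)
qed

lemma rtbr_d_c:
  assumes aN: "a < N" and kN: "k < N" and j: "1 \<le> j" "j \<le> m" and al: "\<alpha> \<noteq> 0"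
  shows "rtbr N m \<alpha> d c (Dc a) (Cc j k) =
     - (1 + \<alpha> * d a) * c j k * ((if a = k then 1 else 0) - (if a = (k + j) mod N then 1 else 0))"
proof -
  let ?L = "Lmat N \<alpha> d" and ?Y = "Uinv N m \<alpha> c" and ?G = "grad_c N m \<alpha> c j k"
  let ?X1 = "lmul N (grad_d \<alpha> a) ?L" and ?X2 = "lmul N ?L (grad_d \<alpha> a)"
  let ?Z1 = "lmul N ?G ?Y" and ?Z2 = "lmul N ?Y ?G"
  have X: "?X1 0 = diag_entry a ((1 + \<alpha> * d a) / \<alpha>)" "?X2 0 = ?X1 0"
    by (simp_all add: lmul_grad_d_Lmat_0 lmul_Lmat_grad_d_0 aN)
  have r: "rtbr N m \<alpha> d c (Dc a) (Cc j k) = \<alpha> * (pair0 N (?X1 0) (?Z1 0) - pair0 N (?X1 0) (?Z2 0))"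
    unfolding rtbr_eq grad_d[OF aN al] grad_c[OF kN al] pb2_fst_snd fst_conv snd_conv
    by (simp add: lpair_Sop lpair_Sst X(2) algebra_simps)
  show ?thesis
    unfolding r X(1) lmul_grad_c_Uinv_0[OF kN j al] lmul_Uinv_grad_c_0[OF kN j al]
    using al aN by (cases "a = k"; cases "a = (k + j) mod N") (simp_all add: field_simps)
qed

lemma rtbr_c_d:
  assumes aN: "a < N" and kN: "k < N" and j: "1 \<le> j" "j \<le> m" and al: "\<alpha> \<noteq> 0"
  shows "rtbr N m \<alpha> d c (Cc j k) (Dc a) =
     (1 + \<alpha> * d a) * c j k * ((if a = k then 1 else 0) - (if a = (k + j) mod N then 1 else 0))"
proof -
  let ?L = "Lmat N \<alpha> d" and ?Y = "Uinv N m \<alpha> c" and ?G = "grad_c N m \<alpha> c j k"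
  let ?Z1 = "lmul N (grad_d \<alpha> a) ?L" and ?Z2 = "lmul N ?L (grad_d \<alpha> a)"
  let ?X1 = "lmul N ?G ?Y" and ?X2 = "lmul N ?Y ?G"
  have Z: "?Z1 0 = diag_entry a ((1 + \<alpha> * d a) / \<alpha>)" "?Z2 0 = ?Z1 0"
    by (simp_all add: lmul_grad_d_Lmat_0 lmul_Lmat_grad_d_0 aN)
  have r: "rtbr N m \<alpha> d c (Cc j k) (Dc a) = \<alpha> * (pair0 N (?X2 0) (?Z1 0) - pair0 N (?X1 0) (?Z1 0))"
    unfolding rtbr_eq grad_d[OF aN al] grad_c[OF kN al] pb2_snd_fst fst_conv snd_conv
    by (simp add: lpair_Sop lpair_Sst lpair_lneg Z(2) algebra_simps)
  show ?thesis
    unfolding r Z(1) lmul_grad_c_Uinv_0[OF kN j al] lmul_Uinv_grad_c_0[OF kN j al]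
    using al kN by (cases "a = k"; cases "a = (k + j) mod N") (simp_all add: field_simps)
qed

section \<open>Brackets between \<open>c\<close>-coordinates\<close>

lemma deg_le_lmul_grad_c_Uinv: "deg_le (int j) (lmul N (grad_c N m \<alpha> c j k) (Uinv N m \<alpha> c))"
  and deg_le_lmul_Uinv_grad_c: "deg_le (int j) (lmul N (Uinv N m \<alpha> c) (grad_c N m \<alpha> c j k))"
  using deg_le_lmul[OF deg_le_grad_c deg_le_Uinv] deg_le_lmul[OF deg_le_Uinv deg_le_grad_c] by simp_all

lemma lpair_lmul_conj:
  assumes "deg_le B G" "deg_le B H" "deg_le B (lmul N H Y)" "deg_le B (lmul N Y G)"
    "deg_le B (lmul N Y H)" "deg_le B Y"
  shows "lpair N (lmul N G Y) (lmul N H Y) = lpair N (lmul N Y G) (lmul N Y H)"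
proof -
  have "lpair N (lmul N G Y) (lmul N H Y) = lpair N Y (lmul N (lmul N H Y) G)"
    by (rule lpair_lmul_cyclic[OF assms(1,6,3)])
  also have "\<dots> = lpair N Y (lmul N H (lmul N Y G))" by (simp add: lmul_assoc[OF assms(2,6,1)])
  also have "\<dots> = lpair N (lmul N Y H) (lmul N Y G)" by (rule lpair_lmul_assoc[symmetric, OF assms(6,2,4)])
  finally show ?thesis by (simp add: lpair_commute)
qed

lemma lmul_Uinv_Ppos_Umat_Eshift:
  assumes "k < N"
  shows "lmul N (Uinv N m \<alpha> c) (Ppos (lmul N (Umat N m \<alpha> c) (Eshift N i k))) = (\<lambda>n a b.
    Eshift N i k n a b - lmul N (Uinv N m \<alpha> c) (ltrunc (lmul N (Umat N m \<alpha> c) (Eshift N i k))) n a b)"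
proof -
  let ?U = "Umat N m \<alpha> c" and ?Y = "Uinv N m \<alpha> c" and ?F = "Eshift N i k"
  have dUF: "deg_le (int i) (lmul N ?U ?F)" using deg_le_lmul[OF deg_le_Umat deg_le_Eshift] by simp
  have dT: "deg_le (int i) (ltrunc (lmul N ?U ?F))" unfolding deg_le_def ltrunc_def by simp
  have "Ppos (lmul N ?U ?F) = (\<lambda>n a b. lmul N ?U ?F n a b - ltrunc (lmul N ?U ?F) n a b)"
    unfolding Ppos_def ltrunc_def by (intro ext) auto
  moreover have "deg_le (int i) ?Y" "deg_le (int i) ?U"
    by (rule deg_le_mono[OF deg_le_Uinv], simp, rule deg_le_mono[OF deg_le_Umat], simp)
  then have "lmul N ?Y (lmul N ?U ?F) = ?F"
    using lmul_assoc[symmetric, OF _ _ deg_le_Eshift] lmul_Uinv_Umat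
      lmul_lone_left[OF square_Eshift[OF assms]]
    by metis
  ultimately show ?thesis by (simp add: lmul_diff_right[OF deg_le_Uinv dUF dT])
qed

lemma lmul_Ppos_Eshift_Umat_Uinv:
  assumes "k < N"
  shows "lmul N (Ppos (lmul N (Eshift N i k) (Umat N m \<alpha> c))) (Uinv N m \<alpha> c) = (\<lambda>n a b.
    Eshift N i k n a b - lmul N (ltrunc (lmul N (Eshift N i k) (Umat N m \<alpha> c))) (Uinv N m \<alpha> c) n a b)"
proof -
  let ?U = "Umat N m \<alpha> c" and ?Y = "Uinv N m \<alpha> c" and ?F = "Eshift N i k"
  have dFU: "deg_le (int i) (lmul N ?F ?U)" using deg_le_lmul[OF deg_le_Eshift deg_le_Umat] by simp
  have dT: "deg_le (int i) (ltrunc (lmul N ?F ?U))" unfolding deg_le_def ltrunc_def by simp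
  have "Ppos (lmul N ?F ?U) = (\<lambda>n a b. lmul N ?F ?U n a b - ltrunc (lmul N ?F ?U) n a b)"
    unfolding Ppos_def ltrunc_def by (intro ext) auto
  moreover have "deg_le (int i) ?Y" "deg_le (int i) ?U"
    by (rule deg_le_mono[OF deg_le_Uinv], simp, rule deg_le_mono[OF deg_le_Umat], simp)
  then have "lmul N (lmul N ?F ?U) ?Y = ?F"
    using lmul_assoc[OF deg_le_Eshift] lmul_Umat_Uinv lmul_lone_right[OF square_Eshift[OF assms]]
    by metis
  ultimately show ?thesis by (simp add: lmul_diff_left[OF dFU dT deg_le_Uinv])
qed

text \<open>The positive-degree part of \<open>G\<^sub>i U\<^sup>-\<^sup>1\<close> is \<open>P\<^sub>>\<^sub>0(U \<lambda>\<^sup>i E)/\<alpha>\<close>; pairing it with \<open>G\<^sub>j U\<^sup>-\<^sup>1\<close> leaves,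
  besides the pairing of the two \<open>U \<lambda> E\<close>-terms, a term independent of the order of the
  factors, which cancels against the corresponding one for \<open>U\<^sup>-\<^sup>1 G\<close>.\<close>

lemma lpair_Ppos_grad_c_Uinv:
  assumes kN: "k < N" and kN': "k' < N"
  shows "lpair N (Ppos (lmul N (grad_c N m \<alpha> c i k) (Uinv N m \<alpha> c)))
      (lmul N (grad_c N m \<alpha> c j k') (Uinv N m \<alpha> c))
   = (lpair N (Ppos (lmul N (Umat N m \<alpha> c) (Eshift N i k))) (lmul N (Umat N m \<alpha> c) (Eshift N j k'))
      - lpair N (Eshift N i k)
          (Pneg (lmul N (lmul N (Umat N m \<alpha> c) (Eshift N j k')) (Umat N m \<alpha> c)))) / \<alpha>\<^sup>2"
proof -
  let ?U = "Umat N m \<alpha> c" and ?Y = "Uinv N m \<alpha> c" and ?F = "Eshift N i k"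
  let ?A = "Ppos (lmul N ?U ?F)" and ?B = "lmul N ?U (Eshift N j k')"
    and ?M = "Pneg (lmul N (lmul N ?U (Eshift N j k')) ?U)"
  define B where "B = int i + int j"
  have dUF: "deg_le (int i) (lmul N ?U ?F)" using deg_le_lmul[OF deg_le_Umat deg_le_Eshift] by simp
  have dB: "deg_le (int j) ?B" using deg_le_lmul[OF deg_le_Umat deg_le_Eshift] by simp
  have dM: "deg_le (-1) ?M" unfolding deg_le_def Pneg_def by simp
  have dT: "deg_le 0 (ltrunc (lmul N ?U ?F))" unfolding deg_le_def ltrunc_def by simp
  have d: "deg_le B ?A" "deg_le B ?B" "deg_le B (lmul N ?M ?Y)" "deg_le B ?Y" "deg_le B ?M" "deg_le B ?F"
    "deg_le B (lmul N ?Y (ltrunc (lmul N ?U ?F)))"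
    using dUF dB deg_le_lmul[OF dM deg_le_Uinv] deg_le_lmul[OF deg_le_Uinv dT] deg_le_Uinv dM
      deg_le_Eshift[of i N k]
    unfolding B_def by (auto simp: deg_le_def Ppos_def)
  have YA: "lmul N ?Y ?A = (\<lambda>n a b. ?F n a b - lmul N ?Y (ltrunc (lmul N ?U ?F)) n a b)"
    by (rule lmul_Uinv_Ppos_Umat_Eshift[OF kN])
  have e1: "Ppos (lmul N (grad_c N m \<alpha> c i k) ?Y) = (\<lambda>n a b. (1 / \<alpha>) * ?A n a b)"
    by (intro ext) (simp add: Ppos_def lmul_grad_c_Uinv_nonneg[OF kN])
  have e2: "lmul N (grad_c N m \<alpha> c j k') ?Y = (\<lambda>n a b. (1 / \<alpha>) * (?B n a b - lmul N ?M ?Y n a b))"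
    by (rule lmul_grad_c_Uinv[OF kN'])
  have "lpair N (Ppos (lmul N (grad_c N m \<alpha> c i k) ?Y)) (lmul N (grad_c N m \<alpha> c j k') ?Y)
      = (lpair N ?A ?B - lpair N ?A (lmul N ?M ?Y)) / \<alpha>\<^sup>2"
    unfolding e1 e2 lpair_smult_left lpair_smult_right lpair_diff_right[OF d(2,3,1)]
    by (simp add: power2_eq_square)
  also have "lpair N ?A (lmul N ?M ?Y) = lpair N (lmul N ?Y ?A) ?M"
    by (rule lpair_lmul_cyclic[symmetric, OF d(4,1,5)])
  also have "\<dots> = lpair N ?F ?M - lpair N (lmul N ?Y (ltrunc (lmul N ?U ?F))) ?M"
    unfolding YA by (rule lpair_diff_left[OF d(6,7,5)])
  also have "lpair N (lmul N ?Y (ltrunc (lmul N ?U ?F))) ?M = 0"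
    using lpair_eq_0_if_deg_negative[OF deg_le_lmul[OF deg_le_Uinv dT] dM] by simp
  finally show ?thesis by simp
qed

lemma lpair_Ppos_Uinv_grad_c:
  assumes kN: "k < N" and kN': "k' < N"
  shows "lpair N (Ppos (lmul N (Uinv N m \<alpha> c) (grad_c N m \<alpha> c i k)))
      (lmul N (Uinv N m \<alpha> c) (grad_c N m \<alpha> c j k'))
   = (lpair N (Ppos (lmul N (Eshift N i k) (Umat N m \<alpha> c))) (lmul N (Eshift N j k') (Umat N m \<alpha> c))
      - lpair N (Eshift N i k)
          (Pneg (lmul N (lmul N (Umat N m \<alpha> c) (Eshift N j k')) (Umat N m \<alpha> c)))) / \<alpha>\<^sup>2"
proof -
  let ?U = "Umat N m \<alpha> c" and ?Y = "Uinv N m \<alpha> c" and ?F = "Eshift N i k"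
  let ?A = "Ppos (lmul N ?F ?U)" and ?B = "lmul N (Eshift N j k') ?U"
    and ?M = "Pneg (lmul N (lmul N ?U (Eshift N j k')) ?U)"
  define B where "B = int i + int j"
  have dFU: "deg_le (int i) (lmul N ?F ?U)" using deg_le_lmul[OF deg_le_Eshift deg_le_Umat] by simp
  have dB: "deg_le (int j) ?B" using deg_le_lmul[OF deg_le_Eshift deg_le_Umat] by simp
  have dM: "deg_le (-1) ?M" unfolding deg_le_def Pneg_def by simp
  have dT: "deg_le 0 (ltrunc (lmul N ?F ?U))" unfolding deg_le_def ltrunc_def by simp
  have d: "deg_le B ?A" "deg_le B ?B" "deg_le B (lmul N ?Y ?M)" "deg_le B ?Y" "deg_le B ?M" "deg_le B ?F"
    "deg_le B (lmul N (ltrunc (lmul N ?F ?U)) ?Y)"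
    using dFU dB deg_le_lmul[OF deg_le_Uinv dM] deg_le_lmul[OF dT deg_le_Uinv] deg_le_Uinv dM
      deg_le_Eshift[of i N k]
    unfolding B_def by (auto simp: deg_le_def Ppos_def)
  have AY: "lmul N ?A ?Y = (\<lambda>n a b. ?F n a b - lmul N (ltrunc (lmul N ?F ?U)) ?Y n a b)"
    by (rule lmul_Ppos_Eshift_Umat_Uinv[OF kN])
  have e1: "Ppos (lmul N ?Y (grad_c N m \<alpha> c i k)) = (\<lambda>n a b. (1 / \<alpha>) * ?A n a b)"
    by (intro ext) (simp add: Ppos_def lmul_Uinv_grad_c_nonneg[OF kN])
  have e2: "lmul N ?Y (grad_c N m \<alpha> c j k') = (\<lambda>n a b. (1 / \<alpha>) * (?B n a b - lmul N ?Y ?M n a b))"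
    by (rule lmul_Uinv_grad_c[OF kN'])
  have "lpair N (Ppos (lmul N ?Y (grad_c N m \<alpha> c i k))) (lmul N ?Y (grad_c N m \<alpha> c j k'))
      = (lpair N ?A ?B - lpair N ?A (lmul N ?Y ?M)) / \<alpha>\<^sup>2"
    unfolding e1 e2 lpair_smult_left lpair_smult_right lpair_diff_right[OF d(2,3,1)]
    by (simp add: power2_eq_square)
  also have "lpair N ?A (lmul N ?Y ?M) = lpair N (lmul N ?A ?Y) ?M"
    by (rule lpair_lmul_assoc[symmetric, OF d(1,4,5)])
  also have "\<dots> = lpair N ?F ?M - lpair N (lmul N (ltrunc (lmul N ?F ?U)) ?Y) ?M"
    unfolding AY by (rule lpair_diff_left[OF d(6,7,5)])
  also have "lpair N (lmul N (ltrunc (lmul N ?F ?U)) ?Y) ?M = 0"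
    using lpair_eq_0_if_deg_negative[OF deg_le_lmul[OF dT deg_le_Uinv] dM] by simp
  finally show ?thesis by simp
qed

text \<open>The degree-zero part of the \<open>c\<close>-\<open>c\<close> bracket (from \<open>P\<^sub>0\<close> and \<open>W\<close>) only depends on the
  positions \<open>k, k', K = k + i, K' = k' + j\<close> of the two gradients' constant diagonals.\<close>

definition sign_pattern :: "nat \<Rightarrow> nat \<Rightarrow> nat \<Rightarrow> nat \<Rightarrow> real" where
  "sign_pattern k k' K K' = (if k = k' then 1 else 0) - (if K = K' then 1 else 0)
     + sgn (real k - real k') + sgn (real K - real K') - (if K = k' then 1 else 0)
     - sgn (real K - real k') + (if k = K' then 1 else 0) - sgn (real k - real K')"

lemma rtbr_c_c:
  assumes kN: "k < N" and kN': "k' < N" and i: "1 \<le> i" "i \<le> m" and j: "1 \<le> j" "j \<le> m"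
    and al: "\<alpha> \<noteq> 0"
  shows "rtbr N m \<alpha> d c (Cc i k) (Cc j k') =
    (lpair N (Ppos (lmul N (Umat N m \<alpha> c) (Eshift N i k))) (lmul N (Umat N m \<alpha> c) (Eshift N j k'))
     - lpair N (Ppos (lmul N (Eshift N i k) (Umat N m \<alpha> c))) (lmul N (Eshift N j k') (Umat N m \<alpha> c))) / \<alpha>
    + \<alpha> / 2 * c i k * c j k' * sign_pattern k k' ((k + i) mod N) ((k' + j) mod N)"
proof -
  let ?Y = "Uinv N m \<alpha> c" and ?G = "grad_c N m \<alpha> c i k" and ?H = "grad_c N m \<alpha> c j k'"
  let ?X1 = "lmul N ?G ?Y" and ?X2 = "lmul N ?Y ?G" and ?Z1 = "lmul N ?H ?Y" and ?Z2 = "lmul N ?Y ?H"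
  let ?SP1 = "lpair N (Ppos (lmul N (Umat N m \<alpha> c) (Eshift N i k))) (lmul N (Umat N m \<alpha> c) (Eshift N j k'))"
  let ?SP2 = "lpair N (Ppos (lmul N (Eshift N i k) (Umat N m \<alpha> c))) (lmul N (Eshift N j k') (Umat N m \<alpha> c))"
  let ?K = "(k + i) mod N" and ?K' = "(k' + j) mod N"
  define B where "B = int i + int j"
  have d: "deg_le B ?X1" "deg_le B ?X2" "deg_le B ?Z1" "deg_le B ?Z2"
    unfolding B_def
    by (auto intro: deg_le_mono[OF deg_le_lmul_grad_c_Uinv] deg_le_mono[OF deg_le_lmul_Uinv_grad_c])
  have conj: "lpair N ?X1 ?Z1 = lpair N ?X2 ?Z2"
    by (rule lpair_lmul_conj[where B = B])
      (auto simp: B_def intro: deg_le_mono[OF deg_le_grad_c] deg_le_mono[OF deg_le_Uinv]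
        deg_le_mono[OF deg_le_lmul_grad_c_Uinv] deg_le_mono[OF deg_le_lmul_Uinv_grad_c])
  have "rtbr N m \<alpha> d c (Cc i k) (Cc j k') = \<alpha> / 2 * (
      (2 * lpair N (Ppos ?X1) ?Z1 + pair0 N (?X1 0) (?Z1 0) - lpair N ?X1 ?Z1 + wpair0 N (?X1 0) (?Z1 0))
    - (2 * lpair N (Ppos ?X2) ?Z2 + pair0 N (?X2 0) (?Z2 0) - lpair N ?X2 ?Z2 - wpair0 N (?X2 0) (?Z2 0))
    - (pair0 N (?X2 0) (?Z1 0) + wpair0 N (?X2 0) (?Z1 0))
    + (pair0 N (?X1 0) (?Z2 0) - wpair0 N (?X1 0) (?Z2 0)))"
    unfolding rtbr_eq grad_c[OF kN al] grad_c[OF kN' al] pb2_snd_snd fst_conv snd_conv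
    by (simp add: lpair_Aone[OF d(1,3)] lpair_Atwo[OF d(2,4)] lpair_Sop lpair_Sst lpair_lneg
        lpair_R0[OF d(1,3)] lpair_R0[OF d(2,4)] B_def)
  also have "\<dots> = (?SP1 - ?SP2) / \<alpha> + \<alpha> / 2 * c i k * c j k' * sign_pattern k k' ?K ?K'"
    unfolding conj lpair_Ppos_grad_c_Uinv[OF kN kN'] lpair_Ppos_Uinv_grad_c[OF kN kN']
      lmul_grad_c_Uinv_0[OF kN i al] lmul_Uinv_grad_c_0[OF kN i al]
      lmul_grad_c_Uinv_0[OF kN' j al] lmul_Uinv_grad_c_0[OF kN' j al]
    using al kN kN' by (simp add: sign_pattern_def field_simps power2_eq_square)
  finally show ?thesis .
qed

section \<open>Evaluation at cyclic offsets\<close>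

definition offset :: "nat \<Rightarrow> nat \<Rightarrow> nat \<Rightarrow> nat" where
  "offset N k t = (k + t) mod N"

lemma offset_less: "k < N \<Longrightarrow> offset N k t < N"
  unfolding offset_def by simp

lemma offset_0: "k < N \<Longrightarrow> offset N k 0 = k"
  unfolding offset_def by simp

lemma offset_offset: "offset N (offset N k s) t = offset N k (s + t)"
  unfolding offset_def by (simp add: mod_add_left_eq add.assoc)

lemma offset_eq_iff: "offset N k t1 = offset N k t2 \<longleftrightarrow> t1 mod N = t2 mod N"
  unfolding offset_def by (simp add: nat_mod_eq_iff)

lemma offset_eq_iff_less: "t1 < N \<Longrightarrow> t2 < N \<Longrightarrow> offset N k t1 = offset N k t2 \<longleftrightarrow> t1 = t2"
  by (simp add: offset_eq_iff)

lemma offset_unfold: "k < N \<Longrightarrow> t < N \<Longrightarrow> offset N k t = (if k + t < N then k + t else k + t - N)"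
  unfolding offset_def by (simp add: le_mod_geq)

lemma offset_surj: "k < N \<Longrightarrow> k' < N \<Longrightarrow> \<exists>s<N. k' = offset N k s"
proof -
  assume "k < N" "k' < N"
  then have "offset N k ((k' + (N - k)) mod N) = k'" and "(k' + (N - k)) mod N < N"
    unfolding offset_def by (simp_all add: mod_add_right_eq)
  then show ?thesis by metis
qed

lemma mod_less_double: "(t::nat) < 2 * N \<Longrightarrow> t mod N = (if t < N then t else t - N)"
  by (simp add: le_mod_geq)

lemma sgn_offset_diff:
  assumes "k < N" "t1 < N" "t2 < N"
  shows "sgn (real (offset N k t1) - real (offset N k t2)) =
   (if t1 = t2 then 0 else if t1 < t2 then (if k + t1 < N \<and> N \<le> k + t2 then 1 else -1)
    else (if k + t2 < N \<and> N \<le> k + t1 then -1 else 1))"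
  using assms offset_unfold[of k N t1] offset_unfold[of k N t2] by (auto simp: sgn_if)

lemma sgn_base_offset_diff:
  assumes "k < N" "t < N"
  shows "sgn (real k - real (offset N k t)) = (if t = 0 then 0 else if N \<le> k + t then 1 else -1)"
    and "sgn (real (offset N k t) - real k) = (if t = 0 then 0 else if N \<le> k + t then -1 else 1)"
  using assms sgn_offset_diff[of k N 0 t] sgn_offset_diff[of k N t 0] by (simp_all add: offset_0)

lemma offset_eq_base_iff:
  "k < N \<Longrightarrow> t < N \<Longrightarrow> offset N k t = k \<longleftrightarrow> t = 0"
  "k < N \<Longrightarrow> t < N \<Longrightarrow> k = offset N k t \<longleftrightarrow> t = 0"
  using offset_eq_iff_less[of t N 0 k] by (auto simp: offset_0)

lemmas offset_sign_simps = sgn_offset_diff sgn_base_offset_diff offset_eq_iff_less offset_eq_base_iff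

lemma sign_pattern_overlap:
  assumes "k < N" "0 < l" "l \<le> i" "i \<le> t" "l < t" "t < N"
  shows "sign_pattern k (offset N k l) (offset N k i) (offset N k t) = -2"
  using assms unfolding sign_pattern_def by (auto simp: offset_sign_simps)

lemma sign_pattern_same_base:
  assumes "k < N" "0 < i" "0 < j" "i < N" "j < N"
  shows "sign_pattern k k (offset N k i) (offset N k j) = (if j < i then 2 else 0)"
  using assms unfolding sign_pattern_def by (auto simp: offset_sign_simps)

lemma sign_pattern_nested:
  assumes "k < N" "0 < s" "0 < j" "s + j < i" "i < N"
  shows "sign_pattern k (offset N k s) (offset N k i) (offset N k (s + j)) = 0"
  using assms unfolding sign_pattern_def by (auto simp: offset_sign_simps)

lemma sign_pattern_disjoint:
  assumes "k < N" "0 < i" "i < s" "0 < j" "s + j < N"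
  shows "sign_pattern k (offset N k s) (offset N k i) (offset N k (s + j)) = 0"
  using assms unfolding sign_pattern_def by (auto simp: offset_sign_simps)

lemma sign_pattern_wrapped:
  assumes "k < N" "0 < i" "i \<le> u" "u < s" "s < N"
  shows "sign_pattern k (offset N k s) (offset N k i) (offset N k u) = 0"
  using assms unfolding sign_pattern_def by (auto simp: offset_sign_simps)

definition ucoef :: "nat \<Rightarrow> real \<Rightarrow> (nat \<Rightarrow> nat \<Rightarrow> real) \<Rightarrow> nat \<Rightarrow> nat \<Rightarrow> real" where
  "ucoef m \<alpha> c r a = (if r = 0 then 1 else - \<alpha> * cv m c r a)"

lemma Umat_entry:
  assumes "a < N"
  shows "Umat N m \<alpha> c (- int r) a b = (if b = offset N a r then ucoef m \<alpha> c r a else 0)"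
  using assms by (cases "r = 0") (auto simp: Umat_0 Umat_neg offset_def ucoef_def cv_def)

lemma lpair_Ppos_Umat_Eshift:
  assumes kN: "k < N" and kN': "k' < N"
  shows "lpair N (Ppos (lmul N (Umat N m \<alpha> c) (Eshift N i k))) (lmul N (Umat N m \<alpha> c) (Eshift N j k'))
    = (\<Sum>q\<in>{1..i}. Umat N m \<alpha> c (- int (i - q)) k' ((k + i) mod N)
        * Umat N m \<alpha> c (- int (q + j)) k ((k' + j) mod N))"
proof -
  let ?U = "Umat N m \<alpha> c"
  let ?f = "\<lambda>q. ?U (int q - int i) k' ((k + i) mod N) * ?U (- int q - int j) k ((k' + j) mod N)"
  have deg: "deg_le (int i) (lmul N ?U (Eshift N i k))"
    using deg_le_lmul[OF deg_le_Umat deg_le_Eshift] by simp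
  have "lpair N (Ppos (lmul N ?U (Eshift N i k))) (lmul N ?U (Eshift N j k'))
      = (\<Sum>a<N. \<Sum>b<N. if a = k' \<and> b = k then (\<Sum>q\<in>{1..i}. ?f q) else 0)"
    unfolding lpair_Ppos_eq_sum[OF deg] lmul_Umat_Eshift[OF kN] lmul_Umat_Eshift[OF kN']
    by (intro sum.cong refl) (auto simp: algebra_simps)
  also have "\<dots> = (\<Sum>q\<in>{1..i}. ?f q)" by (rule sum_sum_delta[OF kN' kN])
  finally show ?thesis by (simp add: of_nat_diff algebra_simps)
qed

lemma lpair_Ppos_Eshift_Umat:
  assumes kN: "k < N" and kN': "k' < N"
  shows "lpair N (Ppos (lmul N (Eshift N i k) (Umat N m \<alpha> c))) (lmul N (Eshift N j k') (Umat N m \<alpha> c))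
    = (\<Sum>q\<in>{1..i}. Umat N m \<alpha> c (- int (i - q)) k ((k' + j) mod N)
        * Umat N m \<alpha> c (- int (q + j)) k' ((k + i) mod N))"
proof -
  let ?U = "Umat N m \<alpha> c"
  let ?f = "\<lambda>q. ?U (int q - int i) k ((k' + j) mod N) * ?U (- int q - int j) k' ((k + i) mod N)"
  have deg: "deg_le (int i) (lmul N (Eshift N i k) ?U)"
    using deg_le_lmul[OF deg_le_Eshift deg_le_Umat] by simp
  have "lpair N (Ppos (lmul N (Eshift N i k) ?U)) (lmul N (Eshift N j k') ?U)
      = (\<Sum>a<N. \<Sum>b<N. if a = (k + i) mod N \<and> b = (k' + j) mod N then (\<Sum>q\<in>{1..i}. ?f q) else 0)"
    unfolding lpair_Ppos_eq_sum[OF deg] lmul_Eshift_Umat[OF kN] lmul_Eshift_Umat[OF kN']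
    by (intro sum.cong refl) (auto simp: algebra_simps)
  also have "\<dots> = (\<Sum>q\<in>{1..i}. ?f q)" using kN by (intro sum_sum_delta) simp_all
  finally show ?thesis by (simp add: of_nat_diff algebra_simps)
qed

lemma lpair_Ppos_Umat_Eshift_offset:
  assumes kN: "k < N" and sN: "s < N" and i: "1 \<le> i" "i \<le> m" and j: "1 \<le> j" "j \<le> m"
    and mN: "2 * m + 2 \<le> N"
  shows "lpair N (Ppos (lmul N (Umat N m \<alpha> c) (Eshift N i k)))
      (lmul N (Umat N m \<alpha> c) (Eshift N j (offset N k s)))
    = (if 1 \<le> s \<and> s \<le> i then ucoef m \<alpha> c (i - s) (offset N k s) * ucoef m \<alpha> c (s + j) k else 0)"
proof -
  let ?k' = "offset N k s"
  have k'N: "?k' < N" by (rule offset_less[OF kN])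
  have "Umat N m \<alpha> c (- int (i - q)) ?k' ((k + i) mod N) * Umat N m \<alpha> c (- int (q + j)) k ((?k' + j) mod N)
      = (if q = s then ucoef m \<alpha> c (i - s) ?k' * ucoef m \<alpha> c (s + j) k else 0)" if q: "q \<in> {1..i}" for q
  proof -
    have e: "(k + i) mod N = offset N k i" "(?k' + j) mod N = offset N k (s + j)"
      by (simp_all add: offset_def[symmetric] offset_offset)
    have "offset N k (s + j) = offset N k (q + j) \<longleftrightarrow> q = s"
      using q i j sN mN mod_less_double[of "s + j" N] by (auto simp: offset_eq_iff)
    moreover have "offset N k i = offset N ?k' (i - s)" if "q = s" using that q by (simp add: offset_offset)
    ultimately show ?thesis
      unfolding e Umat_entry[OF k'N, of m \<alpha> c "i - q"] Umat_entry[OF kN, of m \<alpha> c "q + j"] by auto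
  qed
  then have "(\<Sum>q\<in>{1..i}. Umat N m \<alpha> c (- int (i - q)) ?k' ((k + i) mod N)
        * Umat N m \<alpha> c (- int (q + j)) k ((?k' + j) mod N))
      = (\<Sum>q\<in>{1..i}. if q = s then ucoef m \<alpha> c (i - s) ?k' * ucoef m \<alpha> c (s + j) k else 0)"
    by (rule sum.cong[OF refl])
  then show ?thesis unfolding lpair_Ppos_Umat_Eshift[OF kN k'N] by simp
qed

text \<open>In the mirrored pairing the surviving index is the \<open>q\<close> with \<open>s + q + j \<equiv> i (mod N)\<close>.\<close>

lemma lpair_Ppos_Eshift_Umat_offset:
  assumes kN: "k < N" and sN: "s < N" and i: "1 \<le> i" "i \<le> m" and j: "1 \<le> j" "j \<le> m"
    and mN: "2 * m + 2 \<le> N" and q0: "q0 = (if s + j < i then i - j - s else i + N - s - j)"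
  shows "lpair N (Ppos (lmul N (Eshift N i k) (Umat N m \<alpha> c)))
      (lmul N (Eshift N j (offset N k s)) (Umat N m \<alpha> c))
    = (if 1 \<le> q0 \<and> q0 \<le> i then ucoef m \<alpha> c (i - q0) k * ucoef m \<alpha> c (q0 + j) (offset N k s) else 0)"
proof -
  let ?k' = "offset N k s"
  have k'N: "?k' < N" by (rule offset_less[OF kN])
  have "Umat N m \<alpha> c (- int (i - q)) k ((?k' + j) mod N) * Umat N m \<alpha> c (- int (q + j)) ?k' ((k + i) mod N)
      = (if q = q0 then ucoef m \<alpha> c (i - q0) k * ucoef m \<alpha> c (q0 + j) ?k' else 0)" if q: "q \<in> {1..i}" for q
  proof -
    have e: "(k + i) mod N = offset N k i" "(?k' + j) mod N = offset N k (s + j)"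
      by (simp_all add: offset_def[symmetric] offset_offset)
    have "offset N k i = offset N ?k' (q + j) \<longleftrightarrow> q = q0"
      using q i j sN mN q0 mod_less_double[of "s + (q + j)" N] by (auto simp: offset_offset offset_eq_iff)
    moreover have "offset N k (s + j) = offset N k (i - q0)" if "q = q0"
      using that q q0 sN by (auto simp: offset_eq_iff le_mod_geq add.commute split: if_splits)
    ultimately show ?thesis
      unfolding e Umat_entry[OF kN, of m \<alpha> c "i - q"] Umat_entry[OF k'N, of m \<alpha> c "q + j"] by auto
  qed
  then have "(\<Sum>q\<in>{1..i}. Umat N m \<alpha> c (- int (i - q)) k ((?k' + j) mod N)
        * Umat N m \<alpha> c (- int (q + j)) ?k' ((k + i) mod N))
      = (\<Sum>q\<in>{1..i}. if q = q0 then ucoef m \<alpha> c (i - q0) k * ucoef m \<alpha> c (q0 + j) ?k' else 0)"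
    by (rule sum.cong[OF refl])
  then show ?thesis unfolding lpair_Ppos_Eshift_Umat[OF kN k'N] by simp
qed

lemma rtbr_c_c_offset:
  assumes kN: "k < N" and sN: "s < N" and i: "1 \<le> i" "i \<le> m" and j: "1 \<le> j" "j \<le> m"
    and mN: "2 * m + 2 \<le> N" and al: "\<alpha> \<noteq> 0"
    and q0: "q0 = (if s + j < i then i - j - s else i + N - s - j)"
  shows "rtbr N m \<alpha> d c (Cc i k) (Cc j (offset N k s)) =
    ((if 1 \<le> s \<and> s \<le> i then ucoef m \<alpha> c (i - s) (offset N k s) * ucoef m \<alpha> c (s + j) k else 0)
     - (if 1 \<le> q0 \<and> q0 \<le> i then ucoef m \<alpha> c (i - q0) k * ucoef m \<alpha> c (q0 + j) (offset N k s) else 0)) / \<alpha>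
    + \<alpha> / 2 * c i k * c j (offset N k s) * sign_pattern k (offset N k s) (offset N k i) (offset N k (s + j))"
proof -
  have "(k + i) mod N = offset N k i" "(offset N k s + j) mod N = offset N k (s + j)"
    by (simp_all add: offset_def[symmetric] offset_offset)
  then show ?thesis
    using rtbr_c_c[OF kN offset_less[OF kN] i j al, of d]
      lpair_Ppos_Umat_Eshift_offset[OF kN sN i j mN] lpair_Ppos_Eshift_Umat_offset[OF kN sN i j mN q0]
    by simp
qed

text \<open>All listed brackets, and the unlisted ones where the two shifted diagonals of \<open>U\<close> just touch,
  come from the overlap \<open>s \<le> i \<le> s + j\<close> of the index ranges \<open>[k, k + i]\<close> and \<open>[k + s, k + s + j]\<close>.\<close>

lemma rtbr_c_c_overlap:
  assumes kN: "k < N" and s: "1 \<le> s" "s \<le> i" "i \<le> s + j" and i: "i \<le> m" and j: "1 \<le> j" "j \<le> m"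
    and mN: "2 * m + 2 \<le> N" and al: "\<alpha> \<noteq> 0"
  shows "rtbr N m \<alpha> d c (Cc i k) (Cc j (offset N k s)) =
    ucoef m \<alpha> c (i - s) (offset N k s) * ucoef m \<alpha> c (s + j) k / \<alpha> - \<alpha> * c i k * c j (offset N k s)"
proof -
  have "sign_pattern k (offset N k s) (offset N k i) (offset N k (s + j)) = -2"
    using s i j mN kN by (intro sign_pattern_overlap) auto
  moreover have "\<not> (1 \<le> i + N - s - j \<and> i + N - s - j \<le> i)" using s i j mN by auto
  ultimately show ?thesis
    using rtbr_c_c_offset[OF kN _ _ i j mN al refl, where s = s and d = d and c = c] s i j mN by auto
qed

lemma rtbr_c_c_same_base:
  assumes kN: "k < N" and i: "1 \<le> i" "i \<le> m" and j: "1 \<le> j" "j \<le> m"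
    and mN: "2 * m + 2 \<le> N" and al: "\<alpha> \<noteq> 0"
  shows "rtbr N m \<alpha> d c (Cc i k) (Cc j k) = 0"
proof -
  define q0 where "q0 = (if j < i then i - j else i + N - j)"
  have q0: "q0 = (if 0 + j < i then i - j - 0 else i + N - 0 - j)" unfolding q0_def by simp
  have N: "0 < N" using kN by simp
  have "sign_pattern k k (offset N k i) (offset N k j) = (if j < i then 2 else 0)"
    using i j mN by (intro sign_pattern_same_base kN) auto
  then have r: "rtbr N m \<alpha> d c (Cc i k) (Cc j k) =
      - (if 1 \<le> q0 \<and> q0 \<le> i then ucoef m \<alpha> c (i - q0) k * ucoef m \<alpha> c (q0 + j) k else 0) / \<alpha>
      + \<alpha> / 2 * c i k * c j k * (if j < i then 2 else 0)"
    using rtbr_c_c_offset[OF kN N i j mN al q0, where d = d and c = c] by (simp add: offset_0[OF kN])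
  show ?thesis
  proof (cases "j < i")
    case True
    then have "i - q0 = j" "q0 + j = i" "1 \<le> q0 \<and> q0 \<le> i" unfolding q0_def by auto
    then show ?thesis unfolding r using True i j al by (simp add: ucoef_def cv_def field_simps)
  next
    case False
    then have "\<not> (1 \<le> q0 \<and> q0 \<le> i)" using j mN unfolding q0_def by auto
    then show ?thesis unfolding r using False by auto
  qed
qed

lemma rtbr_c_c_nested:
  assumes kN: "k < N" and s: "1 \<le> s" "s + j < i" and i: "i \<le> m" and j: "1 \<le> j"
    and mN: "2 * m + 2 \<le> N" and al: "\<alpha> \<noteq> 0"
  shows "rtbr N m \<alpha> d c (Cc i k) (Cc j (offset N k s)) = 0"
proof -
  have "sign_pattern k (offset N k s) (offset N k i) (offset N k (s + j)) = 0"
    using s i j mN by (intro sign_pattern_nested kN) auto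
  moreover have "i - (i - j - s) = s + j" "i - j - s + j = i - s" using s by auto
  ultimately show ?thesis
    using rtbr_c_c_offset[OF kN _ _ i j _ mN al refl, where s = s and d = d and c = c] s i j mN
    by (auto simp: add.commute)
qed

lemma rtbr_c_c_disjoint:
  assumes kN: "k < N" and s: "i < s" "s + j < N" and i: "1 \<le> i" "i \<le> m" and j: "1 \<le> j" "j \<le> m"
    and mN: "2 * m + 2 \<le> N" and al: "\<alpha> \<noteq> 0"
  shows "rtbr N m \<alpha> d c (Cc i k) (Cc j (offset N k s)) = 0"
proof -
  have "sign_pattern k (offset N k s) (offset N k i) (offset N k (s + j)) = 0"
    using s i j by (intro sign_pattern_disjoint kN) auto
  then show ?thesis using rtbr_c_c_offset[OF kN _ i j mN al refl, where s = s and d = d and c = c] s by auto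
qed

lemma rtbr_c_c_wrapped:
  assumes kN: "k < N" and s: "s < N" "N \<le> s + j" "i \<le> s + j - N" and i: "1 \<le> i" "i \<le> m"
    and j: "1 \<le> j" "j \<le> m" and mN: "2 * m + 2 \<le> N" and al: "\<alpha> \<noteq> 0"
  shows "rtbr N m \<alpha> d c (Cc i k) (Cc j (offset N k s)) = 0"
proof -
  have "offset N k (s + j) = offset N k (s + j - N)"
    using s by (simp add: offset_eq_iff le_mod_geq)
  moreover have "sign_pattern k (offset N k s) (offset N k i) (offset N k (s + j - N)) = 0"
    using s i j mN by (intro sign_pattern_wrapped kN) auto
  ultimately show ?thesis
    using rtbr_c_c_offset[OF kN s(1) i j mN al refl, where d = d and c = c] s i j mN by auto
qed

lemma listed_Dc_CcI: "listed N (Dc k) (Cc j k)"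
  unfolding listed_def by (rule disjI1) blast

lemma listed_Cc_DcI: "listed N (Cc j k) (Dc ((k + j) mod N))"
  unfolding listed_def by (rule disjI2, rule disjI1) blast

lemma listed_Cc_offsetI:
  "l = i \<or> (i \<le> j \<and> 1 \<le> l \<and> l \<le> i - 1) \<or> (j \<le> i \<and> i - j + 1 \<le> l \<and> l \<le> i - 1) \<Longrightarrow>
    listed N (Cc i k) (Cc j (offset N k l))"
  unfolding listed_def offset_def by blast

lemma rtbr_c_c_unlisted:
  assumes kN: "k < N" and k'N: "k' < N" and i: "1 \<le> i" "i \<le> m" and j: "1 \<le> j" "j \<le> m"
    and mN: "2 * m + 2 \<le> N" and al: "\<alpha> \<noteq> 0"
    and unlisted: "\<not> listed N (Cc i k) (Cc j k')" "\<not> listed N (Cc j k') (Cc i k)"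
  shows "rtbr N m \<alpha> d c (Cc i k) (Cc j k') = 0"
proof -
  obtain s where sN: "s < N" and k': "k' = offset N k s" using offset_surj[OF kN k'N] by blast
  consider "s = 0" | "1 \<le> s" "s + j < i" | "1 \<le> s" "s \<le> i" "i \<le> s + j"
    | "i < s" "s + j < N" | "N \<le> s + j" by linarith
  then show ?thesis
  proof cases
    case 1
    then show ?thesis using rtbr_c_c_same_base[OF kN i j mN al] k' offset_0[OF kN] by simp
  next
    case 2
    then show ?thesis unfolding k' using rtbr_c_c_nested[OF kN _ _ i(2) j(1) mN al] by simp
  next
    case 3 \<comment> \<open>the ranges only touch, and the two surviving products cancel\<close>
    moreover have "\<not> (s = i \<or> (i \<le> j \<and> 1 \<le> s \<and> s \<le> i - 1) \<or> (j \<le> i \<and> i - j + 1 \<le> s \<and> s \<le> i - 1))"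
      using unlisted(1) listed_Cc_offsetI unfolding k' by blast
    ultimately have "s + j = i" "i - s = j" by arith+
    then show ?thesis unfolding k'
      using rtbr_c_c_overlap[OF kN 3 i(2) j mN al, where d = d and c = c] 3 i j al
      by (simp add: ucoef_def cv_def field_simps)
  next
    case 4
    then show ?thesis unfolding k' by (rule rtbr_c_c_disjoint[OF kN _ _ i j mN al])
  next
    case 5 \<comment> \<open>seen from \<open>k'\<close>, the range starting at \<open>k\<close> has offset \<open>N - s\<close>\<close>
    have "k = offset N k' (N - s)" unfolding k' offset_offset using sN kN by (simp add: offset_def)
    then have "\<not> (N - s = j \<or> (j \<le> i \<and> 1 \<le> N - s \<and> N - s \<le> j - 1)
        \<or> (i \<le> j \<and> j - i + 1 \<le> N - s \<and> N - s \<le> j - 1))"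
      using unlisted(2) listed_Cc_offsetI by metis
    then have "i \<le> s + j - N" using 5 sN i j by arith
    then show ?thesis unfolding k' by (rule rtbr_c_c_wrapped[OF kN sN 5 _ i j mN al])
  qed
qed

lemma rtbr_c_c_adjacent:
  assumes "k < N" "1 \<le> i" "i \<le> m" "1 \<le> j" "j \<le> m" "2 * m + 2 \<le> N" "\<alpha> \<noteq> 0"
  shows "rtbr N m \<alpha> d c (Cc i k) (Cc j ((k + i) mod N))
    = - cv m c (i + j) k - \<alpha> * c i k * c j ((k + i) mod N)"
  using rtbr_c_c_overlap[of k N i i j m \<alpha> d c] assms by (simp add: offset_def ucoef_def)

lemma rtbr_c_c_shifted:
  assumes "k < N" "1 \<le> l" "l < i" "i \<le> l + j" "i \<le> m" "1 \<le> j" "j \<le> m" "2 * m + 2 \<le> N"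
    "\<alpha> \<noteq> 0"
  shows "rtbr N m \<alpha> d c (Cc i k) (Cc j ((k + l) mod N))
    = - \<alpha> * c i k * c j ((k + l) mod N) + \<alpha> * cv m c (j + l) k * cv m c (i - l) ((k + l) mod N)"
  using rtbr_c_c_overlap[of k N l i j m \<alpha> d c] assms
  by (simp add: offset_def ucoef_def add.commute power2_eq_square field_simps)

lemma rtbr_d_c_same:
  assumes "k < N" "1 \<le> j" "j \<le> m" "2 * m + 2 \<le> N" "\<alpha> \<noteq> 0"
  shows "rtbr N m \<alpha> d c (Dc k) (Cc j k) = - c j k * (1 + \<alpha> * d k)"
proof -
  have "(k + j) mod N \<noteq> k" using offset_eq_base_iff(1)[of k N j] assms unfolding offset_def by simp
  then show ?thesis using rtbr_d_c[of k N k j m \<alpha> d c] assms by (simp add: algebra_simps)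
qed

lemma rtbr_c_d_shifted:
  assumes "k < N" "1 \<le> j" "j \<le> m" "2 * m + 2 \<le> N" "\<alpha> \<noteq> 0"
  shows "rtbr N m \<alpha> d c (Cc j k) (Dc ((k + j) mod N)) = - c j k * (1 + \<alpha> * d ((k + j) mod N))"
proof -
  have "(k + j) mod N \<noteq> k" using offset_eq_base_iff(1)[of k N j] assms unfolding offset_def by simp
  then show ?thesis using rtbr_c_d[of "(k + j) mod N" N k j m \<alpha> d c] assms by (simp add: algebra_simps)
qed

lemma rtbr_unlisted:
  assumes x: "valid_coord N m x" and y: "valid_coord N m y"
    and unlisted: "\<not> listed N x y" "\<not> listed N y x"
    and mN: "2 * m + 2 \<le> N" and al: "\<alpha> \<noteq> 0"
  shows "rtbr N m \<alpha> d c x y = 0"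
proof (cases x)
  case (Dc a)
  show ?thesis
  proof (cases y)
    case (Dc b)
    with \<open>x = Dc a\<close> x y show ?thesis using rtbr_d_d[OF _ _ al] unfolding valid_coord_def by simp
  next
    case (Cc j k)
    with \<open>x = Dc a\<close> have "a \<noteq> k" "a \<noteq> (k + j) mod N"
      using unlisted listed_Dc_CcI listed_Cc_DcI by metis+
    with Cc \<open>x = Dc a\<close> x y show ?thesis using rtbr_d_c[OF _ _ _ _ al, of a N k j m d c]
      unfolding valid_coord_def by simp
  qed
next
  case (Cc i k)
  show ?thesis
  proof (cases y)
    case (Dc a)
    with \<open>x = Cc i k\<close> have "a \<noteq> k" "a \<noteq> (k + i) mod N"
      using unlisted listed_Dc_CcI listed_Cc_DcI by metis+
    with Dc \<open>x = Cc i k\<close> x y show ?thesis using rtbr_c_d[OF _ _ _ _ al, of a N k i m d c]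
      unfolding valid_coord_def by simp
  next
    case (Cc j k')
    with \<open>x = Cc i k\<close> x y show ?thesis using rtbr_c_c_unlisted[OF _ _ _ _ _ _ mN al] unlisted
      unfolding valid_coord_def by simp
  qed
qed

theorem mainTheorem16:
  fixes N m :: nat and \<alpha> :: real and d :: "nat \<Rightarrow> real" and c :: "nat \<Rightarrow> nat \<Rightarrow> real"
  assumes "m \<ge> 1" and "N \<ge> 2 * m + 2" and "\<alpha> \<noteq> 0"
  shows
   "(\<forall>x. valid_coord N m x \<longrightarrow> (\<exists>!G. has_grad N (coordfun N \<alpha> x) (RTpt N m \<alpha> d c) G))
  \<and> (\<forall>k l. k < N \<longrightarrow> l < N \<longrightarrow> rtbr N m \<alpha> d c (Dc k) (Dc l) = 0)
  \<and> (\<forall>k j. k < N \<longrightarrow> 1 \<le> j \<longrightarrow> j \<le> m \<longrightarrow>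
        rtbr N m \<alpha> d c (Dc k) (Cc j k) = - c j k * (1 + \<alpha> * d k))
  \<and> (\<forall>k j. k < N \<longrightarrow> 1 \<le> j \<longrightarrow> j \<le> m \<longrightarrow>
        rtbr N m \<alpha> d c (Cc j k) (Dc ((k + j) mod N)) = - c j k * (1 + \<alpha> * d ((k + j) mod N)))
  \<and> (\<forall>i j k. k < N \<longrightarrow> 1 \<le> i \<longrightarrow> i \<le> m \<longrightarrow> 1 \<le> j \<longrightarrow> j \<le> m \<longrightarrow>
        rtbr N m \<alpha> d c (Cc i k) (Cc j ((k + i) mod N))
          = - cv m c (i + j) k - \<alpha> * c i k * c j ((k + i) mod N))
  \<and> (\<forall>i j k l. k < N \<longrightarrow> 1 \<le> i \<longrightarrow> i \<le> j \<longrightarrow> j \<le> m \<longrightarrow> 1 \<le> l \<longrightarrow> l \<le> i - 1 \<longrightarrow>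
        rtbr N m \<alpha> d c (Cc i k) (Cc j ((k + l) mod N))
          = - \<alpha> * c i k * c j ((k + l) mod N) + \<alpha> * cv m c (j + l) k * cv m c (i - l) ((k + l) mod N))
  \<and> (\<forall>i j k l. k < N \<longrightarrow> 1 \<le> i \<longrightarrow> i \<le> j \<longrightarrow> j \<le> m \<longrightarrow> j - i + 1 \<le> l \<longrightarrow> l \<le> j - 1 \<longrightarrow>
        rtbr N m \<alpha> d c (Cc j k) (Cc i ((k + l) mod N))
          = - \<alpha> * c j k * c i ((k + l) mod N) + \<alpha> * cv m c (i + l) k * cv m c (j - l) ((k + l) mod N))
  \<and> (\<forall>x y. valid_coord N m x \<longrightarrow> valid_coord N m y \<longrightarrow> \<not> listed N x y \<longrightarrow> \<not> listed N y x \<longrightarrow>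
        rtbr N m \<alpha> d c x y = 0)"
proof -
  have mN: "2 * m + 2 \<le> N" and al: "\<alpha> \<noteq> 0" using assms by simp_all
  show ?thesis
    using ex1_has_grad[OF _ al] rtbr_d_d[OF _ _ al] rtbr_d_c_same[OF _ _ _ mN al]
      rtbr_c_d_shifted[OF _ _ _ mN al] rtbr_c_c_adjacent[OF _ _ _ _ _ mN al]
      rtbr_c_c_shifted[OF _ _ _ _ _ _ _ mN al] rtbr_unlisted[OF _ _ _ _ mN al]
    by (intro conjI allI impI) simp_all
qed

end
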